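(* The normed space $(\mathcal{LP}[0,1],\|\cdot\|_{[0,1]})$ is not complete.
   Context: Laplace integral on $[a,b]$: with lower/upper Laplace derivates $\underline{LD}_1F(x)$, $\overline{LD}_1F(x)$ being the minimum of the $\liminf$'s, resp. maximum of the $\limsup$'s, as $s\to\infty$ of $s^2\int_0^\delta e^{-st}[F(x+t)-F(x)]dt$ and $(-s^2)\int_0^\delta e^{-st}[F(x-t)-F(x)]dt$ (one-sided at endpoints), a major function of $f$ is a continuous $U$ with $\underline{LD}_1U\geqslant f$, $\underline{LD}_1U>-\infty$ everywhere on $[a,b]$, a minor function a continuous $V$ with $\overline{LD}_1V\leqslant f$, $\overline{LD}_1V<\infty$ everywhere, and $f$ is Laplace integrable if $\sup_V(V(b)-V(a))=\inf_U(U(b)-U(a))$ is finite, this value being $\int_a^bf$. $\mathcal{LP}[a,b]$ denotes the space of Laplace integrable functions on $[a,b]$ modulo equality almost everywhere, with the Alexiewicz norm $\|f\|_{[a,b]}=\sup_{x\in[a,b]}\left|\int_a^xf\right|$. *)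

theory Defs
  imports "HOL-Analysis.Analysis"
begin

definition lap_right :: "(real \<Rightarrow> real) \<Rightarrow> real \<Rightarrow> real \<Rightarrow> real \<Rightarrow> real" where
  "lap_right F x \<delta> s = s\<^sup>2 * integral {0..\<delta>} (\<lambda>t. exp (- s * t) * (F (x + t) - F x))"

definition lap_left :: "(real \<Rightarrow> real) \<Rightarrow> real \<Rightarrow> real \<Rightarrow> real \<Rightarrow> real" where
  "lap_left F x \<delta> s = - (s\<^sup>2) * integral {0..\<delta>} (\<lambda>t. exp (- s * t) * (F (x - t) - F x))"

definition lower_LD :: "real \<Rightarrow> real \<Rightarrow> (real \<Rightarrow> real) \<Rightarrow> real \<Rightarrow> ereal" where
  "lower_LD a b F x =
     (let R = Liminf at_top (\<lambda>s. ereal (lap_right F x (b - x) s));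
          L = Liminf at_top (\<lambda>s. ereal (lap_left F x (x - a) s))
      in if x = a then R else if x = b then L else min R L)"

definition upper_LD :: "real \<Rightarrow> real \<Rightarrow> (real \<Rightarrow> real) \<Rightarrow> real \<Rightarrow> ereal" where
  "upper_LD a b F x =
     (let R = Limsup at_top (\<lambda>s. ereal (lap_right F x (b - x) s));
          L = Limsup at_top (\<lambda>s. ereal (lap_left F x (x - a) s))
      in if x = a then R else if x = b then L else max R L)"

definition major_fun :: "real \<Rightarrow> real \<Rightarrow> (real \<Rightarrow> real) \<Rightarrow> (real \<Rightarrow> real) \<Rightarrow> bool" where
  "major_fun a b f U \<longleftrightarrow> continuous_on {a..b} U \<and>
     (\<forall>x\<in>{a..b}. lower_LD a b U x \<ge> ereal (f x) \<and> lower_LD a b U x > -\<infinity>)"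

definition minor_fun :: "real \<Rightarrow> real \<Rightarrow> (real \<Rightarrow> real) \<Rightarrow> (real \<Rightarrow> real) \<Rightarrow> bool" where
  "minor_fun a b f V \<longleftrightarrow> continuous_on {a..b} V \<and>
     (\<forall>x\<in>{a..b}. upper_LD a b V x \<le> ereal (f x) \<and> upper_LD a b V x < \<infinity>)"

definition lap_upper :: "real \<Rightarrow> real \<Rightarrow> (real \<Rightarrow> real) \<Rightarrow> ereal" where
  "lap_upper a b f = (INF U\<in>{U. major_fun a b f U}. ereal (U b - U a))"

definition lap_lower :: "real \<Rightarrow> real \<Rightarrow> (real \<Rightarrow> real) \<Rightarrow> ereal" where
  "lap_lower a b f = (SUP V\<in>{V. minor_fun a b f V}. ereal (V b - V a))"

definition LP_integrable :: "real \<Rightarrow> real \<Rightarrow> (real \<Rightarrow> real) \<Rightarrow> bool" where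
  "LP_integrable a b f \<longleftrightarrow> lap_lower a b f = lap_upper a b f \<and> \<bar>lap_upper a b f\<bar> \<noteq> \<infinity>"

definition LP_integral :: "real \<Rightarrow> real \<Rightarrow> (real \<Rightarrow> real) \<Rightarrow> real" where
  "LP_integral a b f = real_of_ereal (lap_upper a b f)"

text \<open>Alexiewicz norm on [a,b]: sup over x in [a,b] of |int_a^x f|; the term
  x = a contributes 0, so we take the supremum over {a} (value 0) and (a,b].\<close>
definition alex_norm :: "real \<Rightarrow> real \<Rightarrow> (real \<Rightarrow> real) \<Rightarrow> real" where
  "alex_norm a b f = (SUP x\<in>{a..b}. (if x = a then 0 else \<bar>LP_integral a x f\<bar>))"

end

theory Submission
  imports Defs
begin

text \<open>The sequence \<open>f\<^sub>n = F\<^sub>n'\<close>, where \<open>F\<^sub>n x = \<Sum>k<n. 1000\<^sup>-\<^sup>k sin (100000\<^sup>k x)\<close>, is Cauchy for the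
  Alexiewicz norm but has no limit. Each \<open>F\<^sub>n\<close> is smooth, hence both a major and a minor function
  of \<open>f\<^sub>n\<close>, so \<open>\<integral>\<^sub>0\<^sup>x f\<^sub>n = F\<^sub>n x - F\<^sub>n 0\<close>; as \<open>F\<^sub>n\<close> converges uniformly to the Weierstrass-type
  function \<open>W\<close>, the sequence is Cauchy. If \<open>f\<^sub>n \<rightarrow> g\<close>, then \<open>F\<^sub>n - V\<close> and \<open>F\<^sub>n - U\<close> are major and
  minor functions of \<open>f\<^sub>n - g\<close> for every major function \<open>U\<close> and minor function \<open>V\<close> of \<open>g\<close>;
  in the limit \<open>U - W\<close> and \<open>W - V\<close> become nondecreasing, so the right Laplace quotients satisfy
  \<open>LD V \<le> LD W \<le> LD U\<close>. But the quotients of \<open>W\<close> at \<open>s = 100000\<^sup>k\<close> or \<open>2 \<cdot> 100000\<^sup>k\<close> are of size \<open>100\<^sup>k\<close>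
  (the \<open>k\<close>-th term dominates), so those of \<open>U - V\<close> are unbounded above at every point, and
  \<open>U - V\<close> would grow faster than any linear function.\<close>

section \<open>Laplace difference quotients\<close>

lemma exp_kernel_has_integral:
  fixes s d :: real
  assumes "s > 0" "d \<ge> 0"
  shows "((\<lambda>t. exp (- s * t)) has_integral (1 - exp (- s * d)) / s) {0..d}"
proof -
  have "((\<lambda>t. exp (- s * t)) has_integral (- exp (- s * d) / s) - (- exp (- s * 0) / s)) {0..d}"
    using assms by (intro fundamental_theorem_of_calculus)
      (auto intro!: derivative_eq_intros simp: has_real_derivative_iff_has_vector_derivative[symmetric] field_simps)
  then show ?thesis by (rule has_integral_eq_rhs) (use assms in \<open>simp add: field_simps\<close>)
qed

lemma exp_kernel_t_has_integral:
  fixes s d :: real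
  assumes "s > 0" "d \<ge> 0"
  shows "((\<lambda>t. exp (- s * t) * t) has_integral (1 - exp (- s * d) * (1 + s * d)) / s^2) {0..d}"
proof -
  have "((\<lambda>t. exp (- s * t) * t) has_integral
      (- exp (- s * d) * (d / s + 1 / s^2)) - (- exp (- s * 0) * (0 / s + 1 / s^2))) {0..d}"
    using assms by (intro fundamental_theorem_of_calculus)
      (auto intro!: derivative_eq_intros
        simp: has_real_derivative_iff_has_vector_derivative[symmetric] field_simps power2_eq_square)
  then show ?thesis
    by (rule has_integral_eq_rhs) (use assms in \<open>simp add: field_simps power2_eq_square\<close>)
qed

lemma exp_kernel_t2_has_integral:
  fixes s d :: real
  assumes "s > 0" "d \<ge> 0"
  shows "((\<lambda>t. exp (- s * t) * t^2) has_integral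
           (2 - exp (- s * d) * (s^2 * d^2 + 2 * s * d + 2)) / s^3) {0..d}"
proof -
  have "((\<lambda>t. exp (- s * t) * t^2) has_integral
      (- exp (- s * d) * (d^2 / s + 2 * d / s^2 + 2 / s^3))
      - (- exp (- s * 0) * (0^2 / s + 2 * 0 / s^2 + 2 / s^3))) {0..d}"
    using assms by (intro fundamental_theorem_of_calculus)
      (auto intro!: derivative_eq_intros simp: has_real_derivative_iff_has_vector_derivative[symmetric]
        field_simps power2_eq_square power3_eq_cube)
  then show ?thesis
    by (rule has_integral_eq_rhs) (use assms in \<open>simp add: field_simps power2_eq_square power3_eq_cube\<close>)
qed

lemma exp_kernel_integral_bounds:
  fixes s d :: real
  assumes "s > 0" "d \<ge> 0"
  shows "integral {0..d} (\<lambda>t. exp (- s * t)) \<le> 1 / s"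
    and "integral {0..d} (\<lambda>t. exp (- s * t) * t) \<le> 1 / s^2"
    and "integral {0..d} (\<lambda>t. exp (- s * t) * t^2) \<le> 2 / s^3"
  using assms integral_unique[OF exp_kernel_has_integral[OF assms]]
    integral_unique[OF exp_kernel_t_has_integral[OF assms]]
    integral_unique[OF exp_kernel_t2_has_integral[OF assms]]
  by (auto intro!: divide_right_mono)

lemma continuous_on_shift_right:
  fixes F :: "real \<Rightarrow> real"
  assumes "continuous_on {x..x+d} F"
  shows "continuous_on {0..d} (\<lambda>t. F (x + t))"
  by (rule continuous_on_compose2[OF assms]) (auto intro!: continuous_intros)

lemma continuous_on_shift_left:
  fixes F :: "real \<Rightarrow> real"
  assumes "continuous_on {x-d..x} F"
  shows "continuous_on {0..d} (\<lambda>t. F (x - t))"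
  by (rule continuous_on_compose2[OF assms]) (auto intro!: continuous_intros)

lemma lap_right_integrable:
  fixes F :: "real \<Rightarrow> real"
  assumes "continuous_on {x..x+d} F"
  shows "(\<lambda>t. exp (- s * t) * (F (x + t) - F x)) integrable_on {0..d}"
  by (intro integrable_continuous_interval continuous_intros continuous_on_shift_right assms)

lemma lap_left_integrable:
  fixes F :: "real \<Rightarrow> real"
  assumes "continuous_on {x-d..x} F"
  shows "(\<lambda>t. exp (- s * t) * (F (x - t) - F x)) integrable_on {0..d}"
  by (intro integrable_continuous_interval continuous_intros continuous_on_shift_left assms)

lemma lap_right_diff:
  assumes "continuous_on {x..x+d} F" "continuous_on {x..x+d} G"
  shows "lap_right (\<lambda>y. F y - G y) x d s = lap_right F x d s - lap_right G x d s"
proof -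
  have eq: "(\<lambda>t. exp (- s * t) * (F (x + t) - G (x + t) - (F x - G x)))
      = (\<lambda>t. exp (- s * t) * (F (x + t) - F x) - exp (- s * t) * (G (x + t) - G x))"
    by (simp add: fun_eq_iff algebra_simps)
  have "integral {0..d} (\<lambda>t. exp (- s * t) * (F (x + t) - G (x + t) - (F x - G x)))
      = integral {0..d} (\<lambda>t. exp (- s * t) * (F (x + t) - F x))
        - integral {0..d} (\<lambda>t. exp (- s * t) * (G (x + t) - G x))"
    unfolding eq by (intro integral_diff lap_right_integrable assms)
  then show ?thesis unfolding lap_right_def by (simp add: right_diff_distrib)
qed

lemma lap_left_diff:
  assumes "continuous_on {x-d..x} F" "continuous_on {x-d..x} G"
  shows "lap_left (\<lambda>y. F y - G y) x d s = lap_left F x d s - lap_left G x d s"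
proof -
  have eq: "(\<lambda>t. exp (- s * t) * (F (x - t) - G (x - t) - (F x - G x)))
      = (\<lambda>t. exp (- s * t) * (F (x - t) - F x) - exp (- s * t) * (G (x - t) - G x))"
    by (simp add: fun_eq_iff algebra_simps)
  have "integral {0..d} (\<lambda>t. exp (- s * t) * (F (x - t) - G (x - t) - (F x - G x)))
      = integral {0..d} (\<lambda>t. exp (- s * t) * (F (x - t) - F x))
        - integral {0..d} (\<lambda>t. exp (- s * t) * (G (x - t) - G x))"
    unfolding eq by (intro integral_diff lap_left_integrable assms)
  then show ?thesis unfolding lap_left_def by (simp add: right_diff_distrib)
qed

lemma lap_right_cmult: "lap_right (\<lambda>y. c * F y) x d s = c * lap_right F x d s"
proof -
  have "(\<lambda>t. exp (- s * t) * (c * F (x + t) - c * F x)) = (\<lambda>t. c * (exp (- s * t) * (F (x + t) - F x)))"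
    by (simp add: fun_eq_iff algebra_simps)
  then show ?thesis unfolding lap_right_def by simp
qed

lemma lap_right_uminus: "lap_right (\<lambda>y. - F y) x d s = - lap_right F x d s"
  using lap_right_cmult[of "-1" F] by simp

lemma lap_left_uminus: "lap_left (\<lambda>y. - F y) x d s = - lap_left F x d s"
proof -
  have "(\<lambda>t. exp (- s * t) * (- F (x - t) - - F x)) = (\<lambda>t. - (exp (- s * t) * (F (x - t) - F x)))"
    by (simp add: fun_eq_iff algebra_simps)
  then show ?thesis unfolding lap_left_def by simp
qed

lemma lap_right_add:
  assumes "continuous_on {x..x+d} F" "continuous_on {x..x+d} G"
  shows "lap_right (\<lambda>y. F y + G y) x d s = lap_right F x d s + lap_right G x d s"
  using lap_right_diff[OF assms(1) continuous_on_minus[OF assms(2)]] by (simp add: lap_right_uminus)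

lemma lap_right_nonneg:
  assumes "continuous_on {x..x+d} F" "\<And>t. t \<in> {0..d} \<Longrightarrow> F x \<le> F (x + t)"
  shows "lap_right F x d s \<ge> 0"
  unfolding lap_right_def
  by (intro mult_nonneg_nonneg integral_nonneg lap_right_integrable assms) (auto intro!: assms)

definition lap_slope :: "real \<Rightarrow> real \<Rightarrow> real" where
  "lap_slope s d = 1 - exp (- s * d) * (1 + s * d)"

lemma lap_right_ident:
  assumes "s > 0" "d \<ge> 0"
  shows "lap_right (\<lambda>y. y) x d s = lap_slope s d"
  using integral_unique[OF exp_kernel_t_has_integral[OF assms]] assms
  unfolding lap_right_def lap_slope_def by simp

lemma lap_slope_bounds:
  assumes "s > 0" "d \<ge> 0"
  shows "0 \<le> lap_slope s d" and "lap_slope s d \<le> 1"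
proof -
  have "exp (- s * d) * (1 + s * d) \<le> exp (- s * d) * exp (s * d)"
    by (intro mult_left_mono exp_ge_add_one_self) auto
  then show "0 \<le> lap_slope s d" unfolding lap_slope_def by (simp add: exp_minus field_simps)
  show "lap_slope s d \<le> 1" unfolding lap_slope_def using assms by simp
qed

lemma lap_slope_tendsto:
  assumes "d > 0"
  shows "((\<lambda>s. lap_slope s d) \<longlongrightarrow> 1) at_top"
  unfolding lap_slope_def using assms by real_asymp

lemma abs_lap_integral_le:
  fixes H :: "real \<Rightarrow> real"
  assumes H: "continuous_on {0..d} H" and s: "s > 0" and d: "d \<ge> 0"
    and abc: "a \<ge> 0" "b \<ge> 0" "c \<ge> 0"
    and bound: "\<And>t. t \<in> {0..d} \<Longrightarrow> \<bar>H t\<bar> \<le> a + b * t + c * t^2"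
  shows "\<bar>s^2 * integral {0..d} (\<lambda>t. exp (- s * t) * H t)\<bar> \<le> a * s + b + 2 * c / s"
proof -
  define g where "g t = a * exp (- s * t) + b * (exp (- s * t) * t) + c * (exp (- s * t) * t^2)" for t
  note I0 = exp_kernel_has_integral[OF s d] and I1 = exp_kernel_t_has_integral[OF s d]
    and I2 = exp_kernel_t2_has_integral[OF s d]
  have g_integral: "integral {0..d} g = a * integral {0..d} (\<lambda>t. exp (- s * t))
      + b * integral {0..d} (\<lambda>t. exp (- s * t) * t) + c * integral {0..d} (\<lambda>t. exp (- s * t) * t^2)"
    unfolding g_def using I0 I1 I2
    by (intro integral_unique has_integral_add has_integral_mult_right integrable_integral) auto
  have "norm (integral {0..d} (\<lambda>t. exp (- s * t) * H t)) \<le> integral {0..d} g"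
  proof (rule integral_norm_bound_integral)
    show "(\<lambda>t. exp (- s * t) * H t) integrable_on {0..d}"
      by (intro integrable_continuous_interval continuous_intros H)
    show "g integrable_on {0..d}"
      unfolding g_def using I0 I1 I2 by (intro integrable_add integrable_on_mult_right) auto
    fix t assume t: "t \<in> {0..d}"
    have "norm (exp (- s * t) * H t) \<le> exp (- s * t) * (a + b * t + c * t^2)"
      using bound[OF t] by (simp add: abs_mult mult_left_mono)
    then show "norm (exp (- s * t) * H t) \<le> g t" by (simp add: g_def algebra_simps)
  qed
  also have "\<dots> \<le> a * (1 / s) + b * (1 / s^2) + c * (2 / s^3)"
    unfolding g_integral using exp_kernel_integral_bounds[OF s d] abc
    by (intro add_mono mult_left_mono) auto
  finally have "s^2 * \<bar>integral {0..d} (\<lambda>t. exp (- s * t) * H t)\<bar>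
      \<le> s^2 * (a * (1 / s) + b * (1 / s^2) + c * (2 / s^3))"
    by (intro mult_left_mono) auto
  also have "\<dots> = a * s + b + 2 * c / s"
    using s by (simp add: field_simps power2_eq_square power3_eq_cube)
  finally show ?thesis by (simp add: abs_mult)
qed

lemma lap_integral_le:
  fixes H :: "real \<Rightarrow> real"
  assumes H: "continuous_on {0..d} H" and s: "s > 0" and d: "d \<ge> 0" and c: "c \<ge> 0"
    and bound: "\<And>t. t \<in> {0..d} \<Longrightarrow> H t \<le> c * t^2"
  shows "s^2 * integral {0..d} (\<lambda>t. exp (- s * t) * H t) \<le> 2 * c / s"
proof -
  have I2: "(\<lambda>t. exp (- s * t) * t^2) integrable_on {0..d}"
    using exp_kernel_t2_has_integral[OF s d] by blast
  have "integral {0..d} (\<lambda>t. exp (- s * t) * H t) \<le> integral {0..d} (\<lambda>t. c * (exp (- s * t) * t^2))"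
    using bound
    by (intro integral_le integrable_on_mult_right I2 integrable_continuous_interval continuous_intros H)
      (auto simp: algebra_simps intro!: mult_left_mono)
  also have "\<dots> = c * integral {0..d} (\<lambda>t. exp (- s * t) * t^2)" by simp
  also have "\<dots> \<le> c * (2 / s^3)"
    using exp_kernel_integral_bounds(3)[OF s d] c by (rule mult_left_mono)
  finally have "s^2 * integral {0..d} (\<lambda>t. exp (- s * t) * H t) \<le> s^2 * (c * (2 / s^3))"
    by (intro mult_left_mono) auto
  also have "\<dots> = 2 * c / s" using s by (simp add: field_simps power2_eq_square power3_eq_cube)
  finally show ?thesis .
qed

lemma abs_lap_right_le_Lipschitz:
  fixes F :: "real \<Rightarrow> real"
  assumes "continuous_on {x..x+d} F" "s > 0" "d \<ge> 0" "L \<ge> 0"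
    and "\<And>t. t \<in> {0..d} \<Longrightarrow> \<bar>F (x + t) - F x\<bar> \<le> L * t"
  shows "\<bar>lap_right F x d s\<bar> \<le> L"
proof -
  have "\<bar>s^2 * integral {0..d} (\<lambda>t. exp (- s * t) * (F (x + t) - F x))\<bar> \<le> 0 * s + L + 2 * 0 / s"
    using assms by (intro abs_lap_integral_le continuous_intros continuous_on_shift_right) auto
  then show ?thesis unfolding lap_right_def by simp
qed

lemma abs_lap_right_le_bounded:
  fixes F :: "real \<Rightarrow> real"
  assumes "continuous_on {x..x+d} F" "s > 0" "d \<ge> 0" "C \<ge> 0" "\<And>y. \<bar>F y\<bar> \<le> C"
  shows "\<bar>lap_right F x d s\<bar> \<le> 2 * C * s"
proof -
  have "\<bar>F (x + t) - F x\<bar> \<le> 2 * C + 0 * t + 0 * t^2" for t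
    using assms(5)[of "x + t"] assms(5)[of x] by simp
  then have "\<bar>s^2 * integral {0..d} (\<lambda>t. exp (- s * t) * (F (x + t) - F x))\<bar> \<le> 2 * C * s + 0 + 2 * 0 / s"
    using assms by (intro abs_lap_integral_le continuous_intros continuous_on_shift_right) auto
  then show ?thesis unfolding lap_right_def by simp
qed

lemma abs_lap_integral_le_local:
  fixes r :: "real \<Rightarrow> real"
  assumes r: "continuous_on {0..d} r" and s: "s > 0" and d: "d \<ge> 0" and e: "e \<ge> 0" and h: "h > 0"
    and bounded: "\<And>t. t \<in> {0..d} \<Longrightarrow> \<bar>r t\<bar> \<le> C"
    and near: "\<And>t. t \<in> {0..d} \<Longrightarrow> t < h \<Longrightarrow> \<bar>r t\<bar> \<le> e * t"
  shows "\<bar>s^2 * integral {0..d} (\<lambda>t. exp (- s * t) * r t)\<bar> \<le> e + 2 * (C / h^2) / s"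
proof -
  have C: "C \<ge> 0" using bounded[of 0] d by auto
  have "\<bar>r t\<bar> \<le> 0 + e * t + (C / h^2) * t^2" if t: "t \<in> {0..d}" for t
  proof (cases "t < h")
    case True
    then show ?thesis using near[OF t] C by (simp add: add_increasing2)
  next
    case False
    then have "h^2 \<le> t^2" using h by (intro power_mono) auto
    then have "C \<le> (C / h^2) * t^2" using C h by (simp add: field_simps mult_left_mono)
    moreover have "0 \<le> e * t" using e t by simp
    ultimately show ?thesis using bounded[OF t] by linarith
  qed
  from abs_lap_integral_le[OF r s d order_refl e _ this] C show ?thesis by simp
qed

text \<open>The linear part of \<open>H t = c t + r t\<close> contributes \<open>c * lap_slope s d \<longrightarrow> c\<close>.\<close>
lemma lap_integral_tendsto:
  fixes H :: "real \<Rightarrow> real"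
  assumes cont: "continuous_on {0..d} H" and d: "d > 0"
    and linear: "\<And>e. e > 0 \<Longrightarrow> \<exists>h>0. \<forall>t\<in>{0..d}. t < h \<longrightarrow> \<bar>H t - c * t\<bar> \<le> e * t"
  shows "((\<lambda>s. s^2 * integral {0..d} (\<lambda>t. exp (- s * t) * H t)) \<longlongrightarrow> c) at_top"
proof (rule tendstoI)
  fix e :: real assume e: "e > 0"
  define r where "r t = H t - c * t" for t
  have r_cont: "continuous_on {0..d} r" unfolding r_def by (intro continuous_intros cont)
  obtain C where C: "\<And>t. t \<in> {0..d} \<Longrightarrow> \<bar>r t\<bar> \<le> C"
    using continuous_on_compact_bound[OF compact_Icc r_cont] by auto
  obtain h where h: "h > 0" "\<And>t. t \<in> {0..d} \<Longrightarrow> t < h \<Longrightarrow> \<bar>r t\<bar> \<le> (e/3) * t"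
    using linear[of "e/3"] e unfolding r_def by auto
  have "((\<lambda>s. \<bar>c\<bar> * \<bar>lap_slope s d - 1\<bar>) \<longlongrightarrow> \<bar>c\<bar> * \<bar>1 - 1\<bar>) at_top"
    by (intro tendsto_intros lap_slope_tendsto d)
  then have "eventually (\<lambda>s. \<bar>c\<bar> * \<bar>lap_slope s d - 1\<bar> < e/3) at_top"
    using e by (intro order_tendstoD(2)) auto
  moreover have "eventually (\<lambda>s. 2 * (C / h^2) / s < e/3) at_top"
    using e by (intro order_tendstoD(2)[where y = 0]) (real_asymp, simp)
  ultimately show "eventually (\<lambda>s. dist (s^2 * integral {0..d} (\<lambda>t. exp (- s * t) * H t)) c < e) at_top"
    using eventually_gt_at_top[of 0]
  proof eventually_elim
    case (elim s)
    then have s: "s > 0" by simp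
    have "integral {0..d} (\<lambda>t. exp (- s * t) * H t)
        = integral {0..d} (\<lambda>t. c * (exp (- s * t) * t) + exp (- s * t) * r t)"
      unfolding r_def by (simp add: algebra_simps)
    also have "\<dots> = c * integral {0..d} (\<lambda>t. exp (- s * t) * t) + integral {0..d} (\<lambda>t. exp (- s * t) * r t)"
    proof (intro integral_unique has_integral_add has_integral_mult_right integrable_integral)
      show "(\<lambda>t. exp (- s * t) * t) integrable_on {0..d}"
        using exp_kernel_t_has_integral[OF s less_imp_le[OF d]] by blast
      show "(\<lambda>t. exp (- s * t) * r t) integrable_on {0..d}"
        by (intro integrable_continuous_interval continuous_intros r_cont)
    qed
    finally have "s^2 * integral {0..d} (\<lambda>t. exp (- s * t) * H t)
        = c * lap_slope s d + s^2 * integral {0..d} (\<lambda>t. exp (- s * t) * r t)"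
      using lap_right_ident[OF s, of d 0] d unfolding lap_right_def by (simp add: algebra_simps)
    moreover have "\<bar>s^2 * integral {0..d} (\<lambda>t. exp (- s * t) * r t)\<bar> \<le> e/3 + 2 * (C / h^2) / s"
      using C h e d s by (intro abs_lap_integral_le_local r_cont) auto
    moreover have "\<bar>c * lap_slope s d - c\<bar> = \<bar>c\<bar> * \<bar>lap_slope s d - 1\<bar>"
      by (simp add: abs_mult[symmetric] algebra_simps)
    ultimately show ?case using elim unfolding dist_real_def by linarith
  qed
qed

lemma has_real_derivative_local_bound:
  assumes "(F has_real_derivative f) (at x)" "e > 0"
  obtains h where "h > 0" "\<And>t. 0 \<le> t \<Longrightarrow> t < h \<Longrightarrow> \<bar>F (x + t) - F x - f * t\<bar> \<le> e * t"
    "\<And>t. 0 \<le> t \<Longrightarrow> t < h \<Longrightarrow> \<bar>F (x - t) - F x + f * t\<bar> \<le> e * t"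
proof -
  from assms(1) have "(\<lambda>h. (F (x + h) - F x) / h) \<midarrow>0\<rightarrow> f" by (simp add: DERIV_def)
  then obtain h where h: "h > 0" "\<And>y. y \<noteq> 0 \<Longrightarrow> \<bar>y\<bar> < h \<Longrightarrow> \<bar>(F (x + y) - F x) / y - f\<bar> < e"
    using assms(2) unfolding LIM_eq by force
  have bound: "\<bar>F (x + y) - F x - f * y\<bar> \<le> e * \<bar>y\<bar>" if "y \<noteq> 0" "\<bar>y\<bar> < h" for y
  proof -
    have "\<bar>F (x + y) - F x - f * y\<bar> = \<bar>(F (x + y) - F x) / y - f\<bar> * \<bar>y\<bar>"
      using that by (simp add: abs_mult[symmetric] field_simps)
    then show ?thesis using h(2)[OF that] by (simp add: mult_right_mono)
  qed
  show ?thesis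
  proof (rule that[OF h(1)])
    fix t assume t: "0 \<le> t" "t < h"
    from bound[of t] t show "\<bar>F (x + t) - F x - f * t\<bar> \<le> e * t" by (cases "t = 0") auto
    from bound[of "- t"] t show "\<bar>F (x - t) - F x + f * t\<bar> \<le> e * t" by (cases "t = 0") auto
  qed
qed

lemma lap_right_tendsto_deriv:
  assumes "(F has_real_derivative f) (at x)" "continuous_on {x..x+d} F" "d > 0"
  shows "((\<lambda>s. lap_right F x d s) \<longlongrightarrow> f) at_top"
  unfolding lap_right_def
proof (rule lap_integral_tendsto[OF _ assms(3)])
  show "continuous_on {0..d} (\<lambda>t. F (x + t) - F x)"
    by (intro continuous_intros continuous_on_shift_right assms(2))
  fix e :: real assume "e > 0"
  with assms(1) obtain h where "h > 0" "\<And>t. 0 \<le> t \<Longrightarrow> t < h \<Longrightarrow> \<bar>F (x + t) - F x - f * t\<bar> \<le> e * t"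
    by (rule has_real_derivative_local_bound) blast
  then show "\<exists>h>0. \<forall>t\<in>{0..d}. t < h \<longrightarrow> \<bar>F (x + t) - F x - f * t\<bar> \<le> e * t" by auto
qed

lemma lap_left_tendsto_deriv:
  assumes "(F has_real_derivative f) (at x)" "continuous_on {x-d..x} F" "d > 0"
  shows "((\<lambda>s. lap_left F x d s) \<longlongrightarrow> f) at_top"
proof -
  have "((\<lambda>s. s^2 * integral {0..d} (\<lambda>t. exp (- s * t) * (F (x - t) - F x))) \<longlongrightarrow> - f) at_top"
  proof (rule lap_integral_tendsto[OF _ assms(3)])
    show "continuous_on {0..d} (\<lambda>t. F (x - t) - F x)"
      by (intro continuous_intros continuous_on_shift_left assms(2))
    fix e :: real assume "e > 0"
    with assms(1) obtain h where "h > 0" "\<And>t. 0 \<le> t \<Longrightarrow> t < h \<Longrightarrow> \<bar>F (x - t) - F x + f * t\<bar> \<le> e * t"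
      by (rule has_real_derivative_local_bound) blast
    then show "\<exists>h>0. \<forall>t\<in>{0..d}. t < h \<longrightarrow> \<bar>F (x - t) - F x - - f * t\<bar> \<le> e * t" by auto
  qed
  from tendsto_minus[OF this] show ?thesis unfolding lap_left_def by simp
qed

text \<open>Only the behaviour of \<open>F\<close> near \<open>x\<close> matters: the part of the integral over \<open>[d\<^sub>1, d\<^sub>2]\<close>
  is damped by the factor \<open>exp (- s d\<^sub>1)\<close>.\<close>
lemma lap_right_length_tendsto:
  assumes cont: "continuous_on {x..x+d2} F" and d: "0 < d1" "d1 \<le> d2"
  shows "((\<lambda>s. lap_right F x d2 s - lap_right F x d1 s) \<longlongrightarrow> 0) at_top"
proof -
  define H where "H t = F (x + t) - F x" for t
  have H_cont: "continuous_on {0..d2} H"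
    unfolding H_def by (intro continuous_intros continuous_on_shift_right cont)
  obtain C where C: "C \<ge> 0" "\<And>t. t \<in> {0..d2} \<Longrightarrow> \<bar>H t\<bar> \<le> C"
    using continuous_on_compact_bound[OF compact_Icc H_cont] by auto
  have "eventually (\<lambda>s. norm (lap_right F x d2 s - lap_right F x d1 s)
      \<le> s^2 * (exp (- s * d1) * C * (d2 - d1))) at_top"
    using eventually_gt_at_top[of 0]
  proof eventually_elim
    case (elim s)
    have H_int: "(\<lambda>t. exp (- s * t) * H t) integrable_on {0..d2}"
      by (intro integrable_continuous_interval continuous_intros H_cont)
    have lap_H: "lap_right F x d' s = s^2 * integral {0..d'} (\<lambda>t. exp (- s * t) * H t)" for d'
      unfolding lap_right_def H_def by simp
    have "integral {0..d1} (\<lambda>t. exp (- s * t) * H t) + integral {d1..d2} (\<lambda>t. exp (- s * t) * H t)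
        = integral {0..d2} (\<lambda>t. exp (- s * t) * H t)"
      using d by (intro Henstock_Kurzweil_Integration.integral_combine H_int) auto
    then have "integral {0..d2} (\<lambda>t. exp (- s * t) * H t) - integral {0..d1} (\<lambda>t. exp (- s * t) * H t)
        = integral {d1..d2} (\<lambda>t. exp (- s * t) * H t)"
      by linarith
    then have diff: "lap_right F x d2 s - lap_right F x d1 s = s^2 * integral {d1..d2} (\<lambda>t. exp (- s * t) * H t)"
      unfolding lap_H right_diff_distrib[symmetric] by simp
    have "norm (integral {d1..d2} (\<lambda>t. exp (- s * t) * H t)) \<le> integral {d1..d2} (\<lambda>t. exp (- s * d1) * C)"
    proof (rule integral_norm_bound_integral)
      show "(\<lambda>t. exp (- s * t) * H t) integrable_on {d1..d2}"
        using d by (intro integrable_subinterval_real[OF H_int]) auto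
      fix t assume t: "t \<in> {d1..d2}"
      show "norm (exp (- s * t) * H t) \<le> exp (- s * d1) * C"
        using C(2)[of t] t d elim by (auto simp: abs_mult intro!: mult_mono)
    qed auto
    then have "\<bar>integral {d1..d2} (\<lambda>t. exp (- s * t) * H t)\<bar> \<le> exp (- s * d1) * C * (d2 - d1)"
      using d by (simp add: mult_ac)
    then show ?case unfolding diff by (simp add: abs_mult mult_left_mono)
  qed
  moreover have "((\<lambda>s. s^2 * (exp (- s * d1) * C * (d2 - d1))) \<longlongrightarrow> 0) at_top"
    using d by real_asymp
  ultimately show ?thesis by (rule Lim_null_comparison)
qed

section \<open>Monotonicity criteria\<close>

text \<open>If \<open>\<phi>\<close> did not exceed \<open>\<phi> x\<close> on \<open>(x, x + h)\<close>, then \<open>\<phi> (x + t) - \<phi> x \<le> C t\<^sup>2\<close> on \<open>[0, d]\<close>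
  and the quotients would be \<open>O(1/s)\<close>.\<close>
lemma rises_if_lap_right_frequently_ge:
  fixes \<phi> :: "real \<Rightarrow> real"
  assumes cont: "continuous_on {x..x+d} \<phi>" and d: "d > 0" and c: "c > 0"
    and freq: "\<exists>\<^sub>F s in at_top. c \<le> lap_right \<phi> x d s" and h: "h > 0"
  shows "\<exists>t. 0 < t \<and> t < h \<and> t \<le> d \<and> \<phi> x < \<phi> (x + t)"
proof (rule ccontr)
  assume no_rise: "\<not> ?thesis"
  define \<eta> where "\<eta> = min h d / 2"
  have \<eta>: "\<eta> > 0" "\<eta> < h" "\<eta> < d" using h d unfolding \<eta>_def by auto
  define H where "H t = \<phi> (x + t) - \<phi> x" for t
  have H_cont: "continuous_on {0..d} H"
    unfolding H_def by (intro continuous_intros continuous_on_shift_right cont)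
  obtain C where C: "C \<ge> 0" "\<And>t. t \<in> {0..d} \<Longrightarrow> \<bar>H t\<bar> \<le> C"
    using continuous_on_compact_bound[OF compact_Icc H_cont] by auto
  have H_bound: "H t \<le> (C / \<eta>^2) * t^2" if t: "t \<in> {0..d}" for t
  proof (cases "t < \<eta>")
    case True
    with \<eta> t have "t < h" "t \<le> d" by auto
    with no_rise t have "H t \<le> 0" unfolding H_def by (cases "t = 0") (auto simp: not_less)
    moreover have "0 \<le> (C / \<eta>^2) * t^2" using C by simp
    ultimately show ?thesis by linarith
  next
    case False
    then have "\<eta>^2 \<le> t^2" using \<eta> by (intro power_mono) auto
    then have "C \<le> (C / \<eta>^2) * t^2" using C \<eta> by (simp add: field_simps mult_left_mono)
    then show ?thesis using C(2)[OF t] by linarith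
  qed
  have "eventually (\<lambda>s. 2 * (C / \<eta>^2) / s < c) at_top"
    using c by (intro order_tendstoD(2)[where y = 0]) (real_asymp, simp)
  then have "eventually (\<lambda>s. lap_right \<phi> x d s < c) at_top"
    using eventually_gt_at_top[of 0]
  proof eventually_elim
    case (elim s)
    have "lap_right \<phi> x d s \<le> 2 * (C / \<eta>^2) / s"
      unfolding lap_right_def H_def[symmetric]
      using C d elim(2) by (intro lap_integral_le H_cont H_bound) auto
    with elim(1) show ?case by linarith
  qed
  from frequently_eventually_conj[OF freq this] show False
    by (auto dest: frequently_ex)
qed

lemma mono_if_rises:
  fixes \<phi> :: "real \<Rightarrow> real"
  assumes cont: "continuous_on {a..b} \<phi>"
    and rises: "\<And>x h. x \<in> {a..<b} \<Longrightarrow> h > 0 \<Longrightarrow> \<exists>t. 0 < t \<and> t < h \<and> x + t \<le> b \<and> \<phi> x < \<phi> (x + t)"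
    and yz: "a \<le> y" "y \<le> z" "z \<le> b"
  shows "\<phi> y \<le> \<phi> z"
proof (rule ccontr)
  assume less: "\<not> \<phi> y \<le> \<phi> z"
  define S where "S = {u \<in> {y..z}. \<phi> y \<le> \<phi> u}"
  have "closed S" unfolding S_def
    using yz by (intro continuous_on_closed_Collect_le continuous_intros continuous_on_subset[OF cont]) auto
  moreover have "y \<in> S" "bdd_above S" using yz unfolding S_def by (auto intro: bdd_aboveI[of _ z])
  ultimately have c: "Sup S \<in> S" by (intro closed_contains_Sup) auto
  then have "Sup S \<le> z" "\<phi> y \<le> \<phi> (Sup S)" unfolding S_def by auto
  with less have "Sup S < z" by (cases "Sup S = z") auto
  with c yz obtain t where t: "0 < t" "t < z - Sup S" "\<phi> (Sup S) < \<phi> (Sup S + t)"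
    using rises[of "Sup S" "z - Sup S"] unfolding S_def by auto
  with c have "Sup S + t \<in> S" unfolding S_def by auto
  then have "Sup S + t \<le> Sup S" by (intro cSup_upper \<open>bdd_above S\<close>)
  with t show False by simp
qed

lemma mono_if_lap_right_frequently_ge:
  fixes \<phi> :: "real \<Rightarrow> real"
  assumes cont: "continuous_on {a..b} \<phi>"
    and lap: "\<And>x. x \<in> {a..<b} \<Longrightarrow> \<exists>c>0. \<exists>\<^sub>F s in at_top. c \<le> lap_right \<phi> x (b - x) s"
    and yz: "a \<le> y" "y \<le> z" "z \<le> b"
  shows "\<phi> y \<le> \<phi> z"
proof (rule mono_if_rises[OF cont _ yz])
  fix x h :: real assume x: "x \<in> {a..<b}" and h: "h > 0"
  obtain c where "c > 0" "\<exists>\<^sub>F s in at_top. c \<le> lap_right \<phi> x (b - x) s" using lap[OF x] by blast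
  moreover have "continuous_on {x..x + (b - x)} \<phi>" using x by (intro continuous_on_subset[OF cont]) auto
  ultimately show "\<exists>t. 0 < t \<and> t < h \<and> x + t \<le> b \<and> \<phi> x < \<phi> (x + t)"
    using rises_if_lap_right_frequently_ge[of x "b - x" \<phi> c h] x h by force
qed

section \<open>Major and minor functions\<close>

lemma eventually_gt_if_le_Liminf:
  assumes "ereal c \<le> Liminf F (\<lambda>s. ereal (X s))" "e > 0"
  shows "eventually (\<lambda>s. c - e < X s) F"
proof -
  have "ereal (c - e) < ereal c" using assms(2) by simp
  with assms(1) have "eventually (\<lambda>s. ereal (c - e) < ereal (X s)) F"
    unfolding le_Liminf_iff by blast
  then show ?thesis by simp
qed

lemma eventually_less_if_Limsup_le:
  assumes "Limsup F (\<lambda>s. ereal (X s)) \<le> ereal c" "e > 0"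
  shows "eventually (\<lambda>s. X s < c + e) F"
proof -
  have "ereal c < ereal (c + e)" using assms(2) by simp
  with assms(1) have "eventually (\<lambda>s. ereal (X s) < ereal (c + e)) F"
    unfolding Limsup_le_iff by blast
  then show ?thesis by simp
qed

lemma le_Liminf_if_eventually_gt:
  assumes "\<And>e. e > 0 \<Longrightarrow> eventually (\<lambda>s. c - e < X s) F"
  shows "ereal c \<le> Liminf F (\<lambda>s. ereal (X s))"
  unfolding le_Liminf_iff
proof (intro allI impI)
  fix y assume y: "y < ereal c"
  show "eventually (\<lambda>s. y < ereal (X s)) F"
  proof (cases y)
    case (real r)
    with y have "eventually (\<lambda>s. c - (c - r) < X s) F" by (intro assms) auto
    with real show ?thesis by (auto elim: eventually_mono)
  qed (use y in auto)
qed

lemma le_lower_LDI: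
  assumes "a < b" "a \<le> x" "x \<le> b"
    and "x < b \<Longrightarrow> e \<le> Liminf at_top (\<lambda>s. ereal (lap_right F x (b - x) s))"
    and "a < x \<Longrightarrow> e \<le> Liminf at_top (\<lambda>s. ereal (lap_left F x (x - a) s))"
  shows "e \<le> lower_LD a b F x"
  using assms unfolding lower_LD_def Let_def by auto

lemma upper_LD_leI:
  assumes "a < b" "a \<le> x" "x \<le> b"
    and "x < b \<Longrightarrow> Limsup at_top (\<lambda>s. ereal (lap_right F x (b - x) s)) \<le> e"
    and "a < x \<Longrightarrow> Limsup at_top (\<lambda>s. ereal (lap_left F x (x - a) s)) \<le> e"
  shows "upper_LD a b F x \<le> e"
  using assms unfolding upper_LD_def Let_def by auto

lemma major_fun_lap_right_eventually_gt:
  assumes "major_fun a b f U" "a \<le> x" "x < b" "e > 0"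
  shows "eventually (\<lambda>s. f x - e < lap_right U x (b - x) s) at_top"
proof (rule eventually_gt_if_le_Liminf[OF _ assms(4)])
  have "ereal (f x) \<le> lower_LD a b U x" using assms unfolding major_fun_def by auto
  also have "\<dots> \<le> Liminf at_top (\<lambda>s. ereal (lap_right U x (b - x) s))"
    using assms(2,3) unfolding lower_LD_def Let_def by auto
  finally show "ereal (f x) \<le> \<dots>" .
qed

lemma minor_fun_lap_right_eventually_less:
  assumes "minor_fun a b f V" "a \<le> x" "x < b" "e > 0"
  shows "eventually (\<lambda>s. lap_right V x (b - x) s < f x + e) at_top"
proof (rule eventually_less_if_Limsup_le[OF _ assms(4)])
  have "Limsup at_top (\<lambda>s. ereal (lap_right V x (b - x) s)) \<le> upper_LD a b V x"
    using assms(2,3) unfolding upper_LD_def Let_def by auto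
  also have "\<dots> \<le> ereal (f x)" using assms unfolding minor_fun_def by auto
  finally show "Limsup at_top (\<lambda>s. ereal (lap_right V x (b - x) s)) \<le> ereal (f x)" .
qed

lemma minor_fun_lap_left_eventually_less:
  assumes "minor_fun a b f V" "a < x" "x \<le> b" "e > 0"
  shows "eventually (\<lambda>s. lap_left V x (x - a) s < f x + e) at_top"
proof (rule eventually_less_if_Limsup_le[OF _ assms(4)])
  have "Limsup at_top (\<lambda>s. ereal (lap_left V x (x - a) s)) \<le> upper_LD a b V x"
    using assms(2,3) unfolding upper_LD_def Let_def by auto
  also have "\<dots> \<le> ereal (f x)" using assms unfolding minor_fun_def by auto
  finally show "Limsup at_top (\<lambda>s. ereal (lap_left V x (x - a) s)) \<le> ereal (f x)" .
qed

text \<open>The quotients of \<open>U - V + \<epsilon> y\<close> are eventually \<open>\<ge> \<epsilon>/4\<close>, so it is nondecreasing for every \<open>\<epsilon> > 0\<close>.\<close>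
lemma major_minus_minor_mono:
  assumes ab: "a < b" and U: "major_fun a b f U" and V: "minor_fun a b f V"
    and yz: "a \<le> y" "y \<le> z" "z \<le> b"
  shows "U y - V y \<le> U z - V z"
proof (rule field_le_epsilon)
  fix e :: real assume e: "e > 0"
  define \<epsilon> where "\<epsilon> = e / (b - a)"
  have \<epsilon>: "\<epsilon> > 0" unfolding \<epsilon>_def using e ab by simp
  have U_cont: "continuous_on {a..b} U" and V_cont: "continuous_on {a..b} V"
    using U V unfolding major_fun_def minor_fun_def by auto
  define \<phi> where "\<phi> x = U x - V x + \<epsilon> * x" for x
  have "\<phi> y \<le> \<phi> z"
  proof (rule mono_if_lap_right_frequently_ge[OF _ _ yz])
    show "continuous_on {a..b} \<phi>" unfolding \<phi>_def by (intro continuous_intros U_cont V_cont)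
    fix x assume x: "x \<in> {a..<b}"
    have sub: "{x..x + (b - x)} \<subseteq> {a..b}" using x by auto
    note U_cont' = continuous_on_subset[OF U_cont sub] and V_cont' = continuous_on_subset[OF V_cont sub]
    have x': "a \<le> x" "x < b" and \<epsilon>4: "\<epsilon>/4 > 0" using x \<epsilon> by auto
    have "eventually (\<lambda>s. 3/4 < lap_slope s (b - x)) at_top"
      using x' by (intro order_tendstoD(1)[OF lap_slope_tendsto]) auto
    then have "eventually (\<lambda>s. \<epsilon>/4 \<le> lap_right \<phi> x (b - x) s) at_top"
      using major_fun_lap_right_eventually_gt[OF U x' \<epsilon>4] minor_fun_lap_right_eventually_less[OF V x' \<epsilon>4]
        eventually_gt_at_top[of 0]
    proof eventually_elim
      case (elim s)
      have "lap_right \<phi> x (b - x) s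
          = lap_right (\<lambda>y. U y - V y) x (b - x) s + lap_right (\<lambda>y. \<epsilon> * y) x (b - x) s"
        unfolding \<phi>_def by (intro lap_right_add continuous_intros U_cont' V_cont')
      also have "\<dots> = lap_right U x (b - x) s - lap_right V x (b - x) s + \<epsilon> * lap_slope s (b - x)"
        using lap_right_diff[OF U_cont' V_cont'] lap_right_cmult[of \<epsilon> "\<lambda>y. y"]
          lap_right_ident[OF elim(4), of "b - x" x] x' by simp
      finally have "lap_right \<phi> x (b - x) s
          = lap_right U x (b - x) s - lap_right V x (b - x) s + \<epsilon> * lap_slope s (b - x)" .
      moreover have "\<epsilon> * (3/4) \<le> \<epsilon> * lap_slope s (b - x)" using elim \<epsilon> by (intro mult_left_mono) auto
      ultimately show ?case using elim by linarith
    qed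
    then show "\<exists>c>0. \<exists>\<^sub>F s in at_top. c \<le> lap_right \<phi> x (b - x) s"
      using \<epsilon> by (intro exI[of _ "\<epsilon>/4"]) (auto intro: eventually_frequently)
  qed
  then have "U y - V y + \<epsilon> * y \<le> U z - V z + \<epsilon> * z" unfolding \<phi>_def .
  moreover have "\<epsilon> * z - \<epsilon> * y \<le> e"
  proof -
    have "\<epsilon> * (z - y) \<le> \<epsilon> * (b - a)" using yz \<epsilon> by (intro mult_left_mono) auto
    also have "\<dots> = e" unfolding \<epsilon>_def using ab by simp
    finally show ?thesis by (simp add: right_diff_distrib)
  qed
  ultimately show "U y - V y \<le> U z - V z + e" by linarith
qed

lemma major_minor_lap_bounds:
  assumes ab: "a < b" and U: "major_fun a b f U" and V: "minor_fun a b f V"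
  shows "ereal (V b - V a) \<le> lap_lower a b f" "lap_lower a b f \<le> lap_upper a b f"
    "lap_upper a b f \<le> ereal (U b - U a)"
proof -
  show "ereal (V b - V a) \<le> lap_lower a b f" unfolding lap_lower_def using V by (intro SUP_upper) auto
  show "lap_upper a b f \<le> ereal (U b - U a)" unfolding lap_upper_def using U by (intro INF_lower) auto
  show "lap_lower a b f \<le> lap_upper a b f" unfolding lap_lower_def lap_upper_def
  proof (intro SUP_least INF_greatest)
    fix V' U' assume "V' \<in> {V. minor_fun a b f V}" "U' \<in> {U. major_fun a b f U}"
    then have "U' a - V' a \<le> U' b - V' b" using ab by (intro major_minus_minor_mono) auto
    then show "ereal (V' b - V' a) \<le> ereal (U' b - U' a)" by simp
  qed
qed

lemma LP_integral_between_minor_major: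
  assumes "a < b" "major_fun a b f U" "minor_fun a b f V"
  shows "V b - V a \<le> LP_integral a b f" "LP_integral a b f \<le> U b - U a"
proof -
  note bounds = major_minor_lap_bounds[OF assms]
  have lower: "ereal (V b - V a) \<le> lap_upper a b f" using bounds(1,2) by (rule order_trans)
  then obtain r where "lap_upper a b f = ereal r" using bounds(3) by (cases "lap_upper a b f") auto
  with lower bounds(3) show "V b - V a \<le> LP_integral a b f" "LP_integral a b f \<le> U b - U a"
    unfolding LP_integral_def by auto
qed

lemma LP_integral_eq_if_major_minor:
  assumes "a < b" "major_fun a b f F" "minor_fun a b f F"
  shows "LP_integrable a b f" "LP_integral a b f = F b - F a"
proof -
  note bounds = major_minor_lap_bounds[OF assms]
  then have "lap_upper a b f = ereal (F b - F a)" "lap_lower a b f = ereal (F b - F a)"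
    by (metis antisym order.trans)+
  then show "LP_integrable a b f" "LP_integral a b f = F b - F a"
    unfolding LP_integrable_def LP_integral_def by auto
qed

lemma LP_integrable_obtain_major_minor:
  assumes g: "LP_integrable a b g" and e: "e > 0"
  obtains U V where "major_fun a b g U" "minor_fun a b g V" "(U b - U a) - (V b - V a) < e"
proof -
  obtain L where L: "lap_upper a b g = ereal L" "lap_lower a b g = ereal L"
    using g unfolding LP_integrable_def by (cases "lap_upper a b g") auto
  have "(INF U\<in>{U. major_fun a b g U}. ereal (U b - U a)) < ereal (L + e/2)"
    using L(1) e unfolding lap_upper_def by simp
  then obtain U where "major_fun a b g U" "U b - U a < L + e/2" by (auto simp: INF_less_iff)
  moreover have "ereal (L - e/2) < (SUP V\<in>{V. minor_fun a b g V}. ereal (V b - V a))"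
    using L(2) e unfolding lap_lower_def by simp
  then obtain V where "minor_fun a b g V" "L - e/2 < V b - V a" by (auto simp: less_SUP_iff)
  ultimately show ?thesis by (intro that[of U V]) auto
qed

lemma lower_LD_uminus: "lower_LD a b (\<lambda>x. - V x) x = - upper_LD a b V x"
proof -
  have r: "(\<lambda>s. ereal (lap_right (\<lambda>x. - V x) x d s)) = (\<lambda>s. - ereal (lap_right V x d s))" for d
    by (simp add: lap_right_uminus)
  have l: "(\<lambda>s. ereal (lap_left (\<lambda>x. - V x) x d s)) = (\<lambda>s. - ereal (lap_left V x d s))" for d
    by (simp add: lap_left_uminus)
  have "- max R L = min (- R) (- L)" for R L :: ereal
    by (auto simp: min_def max_def)
  then show ?thesis
    unfolding upper_LD_def lower_LD_def Let_def r l ereal_Liminf_uminus by simp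
qed

lemma minor_fun_iff_major_fun_uminus:
  "minor_fun a b f V \<longleftrightarrow> major_fun a b (\<lambda>x. - f x) (\<lambda>x. - V x)"
proof -
  have "continuous_on {a..b} V \<longleftrightarrow> continuous_on {a..b} (\<lambda>x. - V x)"
    using continuous_on_minus[of "{a..b}" V] continuous_on_minus[of "{a..b}" "\<lambda>x. - V x"] by auto
  moreover have "(upper_LD a b V x \<le> ereal (f x) \<and> upper_LD a b V x < \<infinity>) \<longleftrightarrow>
      (ereal (- f x) \<le> - upper_LD a b V x \<and> - upper_LD a b V x > -\<infinity>)" for x
    by (cases "upper_LD a b V x") auto
  ultimately show ?thesis unfolding minor_fun_def major_fun_def lower_LD_uminus by auto
qed

lemma continuous_on_if_has_real_derivative:
  assumes "\<And>y. (F has_real_derivative f y) (at y)"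
  shows "continuous_on S F"
  using assms by (intro continuous_at_imp_continuous_on ballI) (blast intro: DERIV_isCont)

lemma major_fun_minor_fun_if_has_real_derivative:
  assumes ab: "a < b" and der: "\<And>y. (F has_real_derivative f y) (at y)"
  shows "major_fun a b f F" "minor_fun a b f F"
proof -
  have F_cont: "continuous_on S F" for S by (rule continuous_on_if_has_real_derivative[OF der])
  have R: "((\<lambda>s. ereal (lap_right F x (b - x) s)) \<longlongrightarrow> ereal (f x)) at_top" if "x < b" for x
    using that by (intro tendsto_ereal lap_right_tendsto_deriv der F_cont) auto
  have L: "((\<lambda>s. ereal (lap_left F x (x - a) s)) \<longlongrightarrow> ereal (f x)) at_top" if "a < x" for x
    using that by (intro tendsto_ereal lap_left_tendsto_deriv der F_cont) auto
  have "ereal (f x) \<le> lower_LD a b F x" if "x \<in> {a..b}" for x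
    using that ab by (intro le_lower_LDI) (auto simp: lim_imp_Liminf[OF _ R] lim_imp_Liminf[OF _ L])
  then show "major_fun a b f F" unfolding major_fun_def using F_cont
    by (metis MInfty_neq_ereal(1) ereal_infty_less_eq(2) linorder_not_less)
  have "upper_LD a b F x \<le> ereal (f x)" if "x \<in> {a..b}" for x
    using that ab by (intro upper_LD_leI) (auto simp: lim_imp_Limsup[OF _ R] lim_imp_Limsup[OF _ L])
  then show "minor_fun a b f F" unfolding minor_fun_def using F_cont
    by (metis PInfty_neq_ereal(1) ereal_infty_less_eq(1) linorder_not_less)
qed

lemma LP_integral_has_real_derivative:
  assumes "a < b" "\<And>y. (F has_real_derivative f y) (at y)"
  shows "LP_integrable a b f" "LP_integral a b f = F b - F a"
  using LP_integral_eq_if_major_minor[OF assms(1) major_fun_minor_fun_if_has_real_derivative[OF assms]]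
  by auto

text \<open>On the right, the quotients of \<open>V\<close> are taken over \<open>[y, b]\<close> but needed over \<open>[y, c]\<close>;
  \<open>lap_right_length_tendsto\<close> shows the difference is negligible.\<close>
lemma major_fun_diff_restrict:
  assumes ac: "a < c" "c \<le> b" and der: "\<And>y. (F has_real_derivative f y) (at y)"
    and V: "minor_fun a b g V"
  shows "major_fun a c (\<lambda>y. f y - g y) (\<lambda>y. F y - V y)"
proof -
  have F_cont: "continuous_on S F" for S by (rule continuous_on_if_has_real_derivative[OF der])
  have V_cont: "continuous_on S V" if "S \<subseteq> {a..b}" for S
    using V continuous_on_subset that unfolding minor_fun_def by blast
  have lower: "ereal (f y - g y) \<le> lower_LD a c (\<lambda>y. F y - V y) y" if y: "y \<in> {a..c}" for y
  proof (rule le_lower_LDI)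
    show "a < c" "a \<le> y" "y \<le> c" using ac y by auto
  next
    assume yc: "y < c"
    have y': "a \<le> y" "y < b" using y yc ac by auto
    have diff: "lap_right (\<lambda>y. F y - V y) y (c - y) s = lap_right F y (c - y) s - lap_right V y (c - y) s" for s
      using y yc ac by (intro lap_right_diff F_cont V_cont) auto
    have F_lim: "((\<lambda>s. lap_right F y (c - y) s) \<longlongrightarrow> f y) at_top"
      using yc by (intro lap_right_tendsto_deriv der F_cont) auto
    have V_length: "((\<lambda>s. lap_right V y (b - y) s - lap_right V y (c - y) s) \<longlongrightarrow> 0) at_top"
      using y yc ac by (intro lap_right_length_tendsto V_cont) auto
    show "ereal (f y - g y) \<le> Liminf at_top (\<lambda>s. ereal (lap_right (\<lambda>y. F y - V y) y (c - y) s))"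
    proof (rule le_Liminf_if_eventually_gt)
      fix e :: real assume e: "e > 0"
      have "eventually (\<lambda>s. f y - e/3 < lap_right F y (c - y) s) at_top"
        using e by (intro order_tendstoD(1)[OF F_lim]) auto
      moreover have "eventually (\<lambda>s. - (e/3) < lap_right V y (b - y) s - lap_right V y (c - y) s) at_top"
        using e by (intro order_tendstoD(1)[OF V_length]) auto
      moreover have "eventually (\<lambda>s. lap_right V y (b - y) s < g y + e/3) at_top"
        using e by (intro minor_fun_lap_right_eventually_less[OF V y']) auto
      ultimately show "eventually (\<lambda>s. f y - g y - e < lap_right (\<lambda>y. F y - V y) y (c - y) s) at_top"
        unfolding diff by eventually_elim linarith
    qed
  next
    assume ay: "a < y"
    have diff: "lap_left (\<lambda>y. F y - V y) y (y - a) s = lap_left F y (y - a) s - lap_left V y (y - a) s" for s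
      using y ac by (intro lap_left_diff F_cont V_cont) auto
    have F_lim: "((\<lambda>s. lap_left F y (y - a) s) \<longlongrightarrow> f y) at_top"
      using ay by (intro lap_left_tendsto_deriv der F_cont) auto
    show "ereal (f y - g y) \<le> Liminf at_top (\<lambda>s. ereal (lap_left (\<lambda>y. F y - V y) y (y - a) s))"
    proof (rule le_Liminf_if_eventually_gt)
      fix e :: real assume e: "e > 0"
      have "eventually (\<lambda>s. f y - e/2 < lap_left F y (y - a) s) at_top"
        using e by (intro order_tendstoD(1)[OF F_lim]) auto
      moreover have "eventually (\<lambda>s. lap_left V y (y - a) s < g y + e/2) at_top"
        using y ac e by (intro minor_fun_lap_left_eventually_less[OF V ay]) auto
      ultimately show "eventually (\<lambda>s. f y - g y - e < lap_left (\<lambda>y. F y - V y) y (y - a) s) at_top"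
        unfolding diff by eventually_elim linarith
    qed
  qed
  have "continuous_on {a..c} (\<lambda>y. F y - V y)" using ac by (intro continuous_intros F_cont V_cont) auto
  with lower show ?thesis unfolding major_fun_def
    by (metis MInfty_neq_ereal(1) ereal_infty_less_eq(2) linorder_not_less)
qed

lemma minor_fun_diff_restrict:
  assumes "a < c" "c \<le> b" "\<And>y. (F has_real_derivative f y) (at y)" "major_fun a b g U"
  shows "minor_fun a c (\<lambda>y. f y - g y) (\<lambda>y. F y - U y)"
proof -
  have "major_fun a c (\<lambda>y. - f y - - g y) (\<lambda>y. - F y - - U y)"
    using assms unfolding minor_fun_iff_major_fun_uminus[symmetric]
    by (intro major_fun_diff_restrict) (auto intro: derivative_intros simp: minor_fun_iff_major_fun_uminus)
  then show ?thesis unfolding minor_fun_iff_major_fun_uminus by (simp add: algebra_simps)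
qed

section \<open>The Alexiewicz norm and limits of derivatives\<close>

lemma alex_norm_le:
  assumes "a \<le> b" "B \<ge> 0" "\<And>x. x \<in> {a<..b} \<Longrightarrow> \<bar>LP_integral a x h\<bar> \<le> B"
  shows "alex_norm a b h \<le> B"
  unfolding alex_norm_def by (rule cSUP_least) (use assms in auto)

lemma abs_LP_integral_le_alex_norm:
  assumes bound: "\<And>z. z \<in> {a<..b} \<Longrightarrow> \<bar>LP_integral a z h\<bar> \<le> C" and x: "x \<in> {a<..b}"
  shows "\<bar>LP_integral a x h\<bar> \<le> alex_norm a b h"
proof -
  have "bdd_above ((\<lambda>x. if x = a then 0 else \<bar>LP_integral a x h\<bar>) ` {a..b})"
    using bound by (intro bdd_aboveI2[of _ _ "max C 0"]) (simp add: le_max_iff_disj)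
  then have "(if x = a then 0 else \<bar>LP_integral a x h\<bar>) \<le> alex_norm a b h"
    unfolding alex_norm_def by (rule cSUP_upper[rotated]) (use x in auto)
  then show ?thesis using x by simp
qed

text \<open>For \<open>z \<in> (a, b]\<close>, \<open>F\<^sub>n - V\<close> and \<open>F\<^sub>n - U\<close> are major and minor functions of \<open>f\<^sub>n - g\<close> on \<open>[a, z]\<close>.
  At \<open>z = x\<close> this squeezes \<open>\<integral>\<^sub>a\<^sup>x (f\<^sub>n - g) \<rightarrow> 0\<close> between quantities tending to \<open>w - (U x - U a)\<close>
  and \<open>w - (V x - V a)\<close>.\<close>
lemma primitive_limit_between_major_minor:
  assumes ab: "a < b"
    and der: "\<And>n y. (F n has_real_derivative f n y) (at y)"
    and lim: "(\<lambda>n. alex_norm a b (\<lambda>x. f n x - g x)) \<longlonglongrightarrow> 0"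
    and F_lim: "(\<lambda>n. F n x - F n a) \<longlonglongrightarrow> w"
    and U: "major_fun a b g U" and V: "minor_fun a b g V" and x: "x \<in> {a..b}"
  shows "V x - V a \<le> w \<and> w \<le> U x - U a"
proof (cases "x = a")
  case True
  with F_lim have "w = 0" using LIMSEQ_unique[OF _ tendsto_const] by auto
  with True show ?thesis by simp
next
  case False
  with x have x': "x \<in> {a<..b}" by auto
  have U_cont: "continuous_on {a..b} U" and V_cont: "continuous_on {a..b} V"
    using U V unfolding major_fun_def minor_fun_def by auto
  have F_cont: "continuous_on S (F n)" for n S by (rule continuous_on_if_has_real_derivative[OF der])
  have between: "(F n z - U z) - (F n a - U a) \<le> LP_integral a z (\<lambda>y. f n y - g y)
      \<and> LP_integral a z (\<lambda>y. f n y - g y) \<le> (F n z - V z) - (F n a - V a)" if z: "z \<in> {a<..b}" for n z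
  proof -
    from z have z': "a < z" "z \<le> b" by auto
    from LP_integral_between_minor_major[OF z'(1) major_fun_diff_restrict[OF z' der V]
        minor_fun_diff_restrict[OF z' der U]]
    show ?thesis by simp
  qed
  have alex: "\<bar>LP_integral a x (\<lambda>y. f n y - g y)\<bar> \<le> alex_norm a b (\<lambda>x. f n x - g x)" for n
  proof -
    have "continuous_on {a..b} (\<lambda>z. \<bar>(F n z - U z) - (F n a - U a)\<bar> + \<bar>(F n z - V z) - (F n a - V a)\<bar>)"
      by (intro continuous_intros F_cont U_cont V_cont)
    then obtain C where C: "\<And>z. z \<in> {a..b} \<Longrightarrow>
        norm (\<bar>(F n z - U z) - (F n a - U a)\<bar> + \<bar>(F n z - V z) - (F n a - V a)\<bar>) \<le> C"
      using continuous_on_compact_bound[OF compact_Icc] by blast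
    show ?thesis
    proof (rule abs_LP_integral_le_alex_norm[OF _ x'])
      fix z assume z: "z \<in> {a<..b}"
      then have "z \<in> {a..b}" by auto
      with between[OF z, of n] C[OF this, unfolded real_norm_def]
      show "\<bar>LP_integral a z (\<lambda>y. f n y - g y)\<bar> \<le> C" by linarith
    qed
  qed
  have "F n x - F n a - (U x - U a) \<le> alex_norm a b (\<lambda>x. f n x - g x)" for n
    using between[OF x', of n] alex[of n] by linarith
  then have "w - (U x - U a) \<le> 0"
    by (intro LIMSEQ_le[OF tendsto_diff[OF F_lim tendsto_const] lim]) blast
  moreover have "- alex_norm a b (\<lambda>x. f n x - g x) \<le> F n x - F n a - (V x - V a)" for n
    using between[OF x', of n] alex[of n] by linarith
  then have "- 0 \<le> w - (V x - V a)"
    by (intro LIMSEQ_le[OF tendsto_minus[OF lim] tendsto_diff[OF F_lim tendsto_const]]) blast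
  ultimately show ?thesis by simp
qed

text \<open>Pin \<open>W\<close> between a major function \<open>U'\<close> and a minor function \<open>V'\<close> whose increments over
  \<open>[a, b]\<close> differ by less than \<open>e\<close>, and compare \<open>U\<close> with \<open>V'\<close> and \<open>V\<close> with \<open>U'\<close>.\<close>
lemma major_minus_primitive_mono:
  assumes ab: "a < b" and g: "LP_integrable a b g"
    and between: "\<And>U V x. major_fun a b g U \<Longrightarrow> minor_fun a b g V \<Longrightarrow> x \<in> {a..b} \<Longrightarrow>
      V x - V a \<le> W x - W a \<and> W x - W a \<le> U x - U a"
    and U: "major_fun a b g U" and V: "minor_fun a b g V" and yz: "a \<le> y" "y \<le> z" "z \<le> b"
  shows "U y - W y \<le> U z - W z \<and> W y - V y \<le> W z - V z"
proof -
  have close: "W z - W y \<le> U z - U y + e \<and> V z - V y \<le> W z - W y + e" if e: "e > 0" for e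
  proof -
    obtain U' V' where U': "major_fun a b g U'" and V': "minor_fun a b g V'"
      and gap: "(U' b - U' a) - (V' b - V' a) < e"
      using LP_integrable_obtain_major_minor[OF g e] by blast
    have "V' z - V' a \<le> W z - W a \<and> W z - W a \<le> U' z - U' a"
      "V' y - V' a \<le> W y - W a \<and> W y - W a \<le> U' y - U' a"
      using yz by (intro between[OF U' V']; simp)+
    moreover have "U' z - V' z \<le> U' b - V' b" using yz by (intro major_minus_minor_mono[OF ab U' V']) auto
    moreover have "U y - V' y \<le> U z - V' z" using yz by (intro major_minus_minor_mono[OF ab U V'])
    moreover have "U' y - V y \<le> U' z - V z" using yz by (intro major_minus_minor_mono[OF ab U' V])
    ultimately show ?thesis using gap by linarith
  qed
  have "U y - W y \<le> U z - W z"
  proof (rule field_le_epsilon)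
    fix e :: real assume "e > 0"
    from close[OF this] show "U y - W y \<le> U z - W z + e" by linarith
  qed
  moreover have "W y - V y \<le> W z - V z"
  proof (rule field_le_epsilon)
    fix e :: real assume "e > 0"
    from close[OF this] show "W y - V y \<le> W z - V z + e" by linarith
  qed
  ultimately show ?thesis ..
qed

text \<open>The quotients of \<open>U\<close>, \<open>W\<close>, \<open>V\<close> are ordered, those of \<open>U\<close> are eventually bounded below and
  those of \<open>V\<close> bounded above; so a large quotient of \<open>W\<close> of either sign makes \<open>U - V\<close> rise steeply.\<close>
lemma lap_right_major_minus_minor_frequently_gt:
  assumes U: "major_fun a b g U" and V: "minor_fun a b g V" and W: "continuous_on {a..b} W"
    and mono: "\<And>y z. a \<le> y \<Longrightarrow> y \<le> z \<Longrightarrow> z \<le> b \<Longrightarrow> U y - W y \<le> U z - W z \<and> W y - V y \<le> W z - V z"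
    and unbounded: "\<And>B. \<exists>\<^sub>F s in at_top. B < \<bar>lap_right W x (b - x) s\<bar>"
    and x: "a \<le> x" "x < b"
  shows "\<exists>\<^sub>F s in at_top. B < lap_right (\<lambda>y. U y - V y) x (b - x) s"
proof -
  have sub: "{x..x + (b - x)} \<subseteq> {a..b}" using x by auto
  have U_cont: "continuous_on {x..x + (b - x)} U" and V_cont: "continuous_on {x..x + (b - x)} V"
    using U V continuous_on_subset[OF _ sub] unfolding major_fun_def minor_fun_def by auto
  have W_cont: "continuous_on {x..x + (b - x)} W" using W sub by (rule continuous_on_subset)
  have ordered: "lap_right V x (b - x) s \<le> lap_right W x (b - x) s \<and> lap_right W x (b - x) s \<le> lap_right U x (b - x) s"
    for s
  proof -
    have "0 \<le> lap_right (\<lambda>y. U y - W y) x (b - x) s" "0 \<le> lap_right (\<lambda>y. W y - V y) x (b - x) s"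
      using x mono by (intro lap_right_nonneg continuous_intros U_cont V_cont W_cont; simp)+
    then show ?thesis
      using lap_right_diff[OF U_cont W_cont, of s] lap_right_diff[OF W_cont V_cont, of s] by linarith
  qed
  have "eventually (\<lambda>s. g x - 1 < lap_right U x (b - x) s \<and> lap_right V x (b - x) s < g x + 1) at_top"
    using major_fun_lap_right_eventually_gt[OF U x, of 1] minor_fun_lap_right_eventually_less[OF V x, of 1]
    by (simp add: eventually_conj)
  from frequently_eventually_conj[OF unbounded[of "B + \<bar>g x\<bar> + 1"] this]
  show ?thesis
  proof (rule frequently_elim1)
    fix s
    assume "(g x - 1 < lap_right U x (b - x) s \<and> lap_right V x (b - x) s < g x + 1)
      \<and> B + \<bar>g x\<bar> + 1 < \<bar>lap_right W x (b - x) s\<bar>"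
    with ordered[of s] show "B < lap_right (\<lambda>y. U y - V y) x (b - x) s"
      unfolding lap_right_diff[OF U_cont V_cont] by linarith
  qed
qed

lemma not_primitive_if_lap_right_unbounded:
  assumes ab: "a < b" and U: "major_fun a b g U" and V: "minor_fun a b g V" and W: "continuous_on {a..b} W"
    and mono: "\<And>y z. a \<le> y \<Longrightarrow> y \<le> z \<Longrightarrow> z \<le> b \<Longrightarrow> U y - W y \<le> U z - W z \<and> W y - V y \<le> W z - V z"
    and unbounded: "\<And>x B. x \<in> {a..<b} \<Longrightarrow> \<exists>\<^sub>F s in at_top. B < \<bar>lap_right W x (b - x) s\<bar>"
  shows False
proof -
  define P where "P y = U y - V y" for y
  define K where "K = (\<bar>P b - P a\<bar> + 1) / (b - a)"
  have K: "K \<ge> 0" "K * (b - a) = \<bar>P b - P a\<bar> + 1" unfolding K_def using ab by auto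
  have U_cont: "continuous_on {a..b} U" and V_cont: "continuous_on {a..b} V"
    using U V unfolding major_fun_def minor_fun_def by auto
  have rises: "\<exists>c>0. \<exists>\<^sub>F s in at_top. c \<le> lap_right (\<lambda>y. P y - K * y) x (b - x) s"
    if x: "x \<in> {a..<b}" for x
  proof -
    have sub: "{x..x + (b - x)} \<subseteq> {a..b}" using x by auto
    have P_cont: "continuous_on {x..x + (b - x)} P"
      unfolding P_def by (intro continuous_intros continuous_on_subset[OF U_cont sub] continuous_on_subset[OF V_cont sub])
    have "\<exists>\<^sub>F s in at_top. K + 1 < lap_right P x (b - x) s"
      unfolding P_def using x
      by (intro lap_right_major_minus_minor_frequently_gt[OF U V W mono unbounded]) auto
    from frequently_eventually_conj[OF this eventually_gt_at_top[of 0]]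
    have "\<exists>\<^sub>F s in at_top. 1 \<le> lap_right (\<lambda>y. P y - K * y) x (b - x) s"
    proof (rule frequently_elim1)
      fix s assume s: "0 < s \<and> K + 1 < lap_right P x (b - x) s"
      then have "K * lap_slope s (b - x) \<le> K * 1"
        using x K by (intro mult_left_mono lap_slope_bounds) auto
      moreover have "lap_right (\<lambda>y. P y - K * y) x (b - x) s = lap_right P x (b - x) s - K * lap_slope s (b - x)"
        using s x lap_right_diff[OF P_cont continuous_on_mult_const] lap_right_cmult[of K "\<lambda>y. y"]
          lap_right_ident[of s "b - x" x]
        by simp
      ultimately show "1 \<le> lap_right (\<lambda>y. P y - K * y) x (b - x) s" using s by linarith
    qed
    then show ?thesis by (intro exI[of _ 1]) simp
  qed
  have "continuous_on {a..b} (\<lambda>y. P y - K * y)"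
    unfolding P_def by (intro continuous_intros U_cont V_cont)
  from mono_if_lap_right_frequently_ge[OF this rises, of a b] ab
  have "P a - K * a \<le> P b - K * b" by simp
  then have "K * (b - a) \<le> P b - P a" by (simp add: algebra_simps)
  with K show False by linarith
qed

section \<open>A Weierstrass-type function\<close>

definition weier_a :: "nat \<Rightarrow> real" where "weier_a k = (1/1000)^k"
definition weier_b :: "nat \<Rightarrow> real" where "weier_b k = 100000^k"

definition weier_sum :: "nat \<Rightarrow> real \<Rightarrow> real" where
  "weier_sum n x = (\<Sum>k<n. weier_a k * sin (weier_b k * x))"

definition weier_sum_deriv :: "nat \<Rightarrow> real \<Rightarrow> real" where
  "weier_sum_deriv n x = (\<Sum>k<n. weier_a k * weier_b k * cos (weier_b k * x))"

definition weier :: "real \<Rightarrow> real" where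
  "weier x = (\<Sum>k. weier_a k * sin (weier_b k * x))"

lemma weier_a_pos: "weier_a k > 0"
  unfolding weier_a_def by simp

lemma weier_b_pos: "weier_b k > 0"
  unfolding weier_b_def by simp

lemma weier_a_mult_b: "weier_a k * weier_b k = 100^k"
  unfolding weier_a_def weier_b_def by (simp add: power_mult_distrib[symmetric])

lemma weier_a_antimono: "m \<le> n \<Longrightarrow> weier_a n \<le> weier_a m"
  unfolding weier_a_def by (rule power_decreasing) auto

lemma weier_a_tendsto: "weier_a \<longlonglongrightarrow> 0"
  unfolding weier_a_def by (rule LIMSEQ_power_zero) simp

lemma abs_weier_term_le: "\<bar>weier_a k * sin (weier_b k * x)\<bar> \<le> weier_a k"
  using weier_a_pos[of k] by (simp add: abs_mult mult_left_le)

lemma summable_weier_a: "summable weier_a"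
  unfolding weier_a_def by (rule summable_geometric) simp

lemma summable_weier_terms: "summable (\<lambda>k. weier_a k * sin (weier_b k * x))"
  by (rule summable_comparison_test'[OF summable_weier_a]) (simp add: abs_weier_term_le)

lemma abs_weier_minus_sum_le: "\<bar>weier x - weier_sum n x\<bar> \<le> 2 * weier_a n"
proof -
  have tail: "(\<lambda>k. weier_a (k + n)) sums (weier_a n * (1000/999))"
    using sums_mult[OF geometric_sums[of "1/1000 :: real"], of "weier_a n"]
    by (simp add: weier_a_def power_add mult.commute)
  have "weier x - weier_sum n x = (\<Sum>k. weier_a (k + n) * sin (weier_b (k + n) * x))"
    using suminf_split_initial_segment[OF summable_weier_terms, of x n]
    unfolding weier_def weier_sum_def by simp
  also have "\<bar>\<dots>\<bar> \<le> (\<Sum>k. weier_a (k + n))"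
    by (intro norm_suminf_le[where 'a = real, unfolded real_norm_def] sums_summable[OF tail] abs_weier_term_le)
  also have "\<dots> \<le> 2 * weier_a n"
    using sums_unique[OF tail] weier_a_pos[of n] by simp
  finally show ?thesis .
qed

lemma has_real_derivative_weier_sum: "(weier_sum n has_real_derivative weier_sum_deriv n x) (at x)"
  unfolding weier_sum_def weier_sum_deriv_def by (auto intro!: derivative_eq_intros simp: algebra_simps)

lemma weier_sum_tendsto: "(\<lambda>n. weier_sum n x) \<longlonglongrightarrow> weier x"
  unfolding weier_sum_def weier_def by (rule summable_LIMSEQ[OF summable_weier_terms])

lemma continuous_on_weier: "continuous_on S weier"
proof (rule uniform_limit_theorem[where f = weier_sum and F = sequentially])
  show "\<forall>\<^sub>F n in sequentially. continuous_on S (weier_sum n)"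
    using continuous_on_if_has_real_derivative[OF has_real_derivative_weier_sum] by simp
  show "uniform_limit S weier_sum weier sequentially"
  proof (rule uniform_limitI)
    fix e :: real assume "e > 0"
    then have "eventually (\<lambda>n. 2 * weier_a n < e) sequentially"
      using tendsto_mult_left[OF weier_a_tendsto, of 2] by (auto simp: order_tendsto_iff)
    moreover have "dist (weier_sum n x) (weier x) \<le> 2 * weier_a n" for n x
      using abs_weier_minus_sum_le[of x n] by (simp add: dist_real_def abs_minus_commute)
    ultimately show "\<forall>\<^sub>F n in sequentially. \<forall>x\<in>S. dist (weier_sum n x) (weier x) < e"
      by (auto elim!: eventually_mono intro: le_less_trans)
  qed
qed simp

lemma abs_sin_diff_le: "\<bar>sin w - sin z\<bar> \<le> \<bar>w - z\<bar>" for w z :: real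
proof -
  have "\<bar>sin w - sin z\<bar> = 2 * \<bar>sin ((w - z) / 2)\<bar> * \<bar>cos ((w + z) / 2)\<bar>"
    by (simp add: sin_diff_sin abs_mult)
  also have "\<dots> \<le> 2 * \<bar>(w - z) / 2\<bar> * 1"
    by (intro mult_mono abs_sin_x_le_abs_x) auto
  finally show ?thesis by simp
qed

lemma abs_weier_sum_diff_le: "\<bar>weier_sum k y - weier_sum k z\<bar> \<le> 100^k / 99 * \<bar>y - z\<bar>"
proof -
  have "\<bar>weier_sum k y - weier_sum k z\<bar> = \<bar>\<Sum>j<k. weier_a j * (sin (weier_b j * y) - sin (weier_b j * z))\<bar>"
    unfolding weier_sum_def by (simp add: sum_subtractf[symmetric] algebra_simps)
  also have "\<dots> \<le> (\<Sum>j<k. \<bar>weier_a j * (sin (weier_b j * y) - sin (weier_b j * z))\<bar>)"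
    by (rule sum_abs)
  also have "\<dots> \<le> (\<Sum>j<k. 100^j * \<bar>y - z\<bar>)"
  proof (rule sum_mono)
    fix j
    have "\<bar>sin (weier_b j * y) - sin (weier_b j * z)\<bar> \<le> weier_b j * \<bar>y - z\<bar>"
      using abs_sin_diff_le[of "weier_b j * y" "weier_b j * z"] weier_b_pos[of j]
      by (simp add: abs_mult right_diff_distrib[symmetric])
    then have "weier_a j * \<bar>sin (weier_b j * y) - sin (weier_b j * z)\<bar> \<le> weier_a j * (weier_b j * \<bar>y - z\<bar>)"
      using weier_a_pos[of j] by (intro mult_left_mono) auto
    then show "\<bar>weier_a j * (sin (weier_b j * y) - sin (weier_b j * z))\<bar> \<le> 100^j * \<bar>y - z\<bar>"
      using weier_a_pos[of j] weier_a_mult_b[of j] by (simp add: abs_mult mult.assoc[symmetric])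
  qed
  also have "\<dots> = (100^k - 1) / 99 * \<bar>y - z\<bar>"
    by (simp add: sum_distrib_right[symmetric]) (induction k, simp_all add: field_simps)
  also have "\<dots> \<le> 100^k / 99 * \<bar>y - z\<bar>"
    by (intro mult_right_mono divide_right_mono) auto
  finally show ?thesis .
qed

lemma lap_right_sin:
  fixes s b d x :: real
  assumes s: "s > 0" and b: "b > 0" and d: "d \<ge> 0"
  shows "lap_right (\<lambda>y. sin (b * y)) x d s = s * b * (s * cos (b * x) - b * sin (b * x)) / (s^2 + b^2)
    + exp (- s * d) * (s^2 * (- s * sin (b * (x + d)) - b * cos (b * (x + d))) / (s^2 + b^2) + s * sin (b * x))"
proof -
  define G where "G t = exp (- s * t) * (- s * sin (b * (x + t)) - b * cos (b * (x + t)))" for t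
  have sb: "s^2 + b^2 > 0" using s b by (simp add: add_pos_pos)
  have "((\<lambda>t. (s^2 + b^2) * (exp (- s * t) * sin (b * (x + t)))) has_integral G d - G 0) {0..d}"
  proof (rule fundamental_theorem_of_calculus[OF d])
    fix t assume "t \<in> {0..d}"
    have "(G has_real_derivative (s^2 + b^2) * (exp (- s * t) * sin (b * (x + t)))) (at t within {0..d})"
      unfolding G_def by (auto intro!: derivative_eq_intros simp: algebra_simps power2_eq_square)
    then show "(G has_vector_derivative (s^2 + b^2) * (exp (- s * t) * sin (b * (x + t)))) (at t within {0..d})"
      by (simp add: has_real_derivative_iff_has_vector_derivative)
  qed
  from has_integral_mult_right[OF this, of "1 / (s^2 + b^2)"]
  have "((\<lambda>t. exp (- s * t) * sin (b * (x + t))) has_integral (G d - G 0) / (s^2 + b^2)) {0..d}"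
    using s by simp
  from has_integral_diff[OF this has_integral_mult_right[OF exp_kernel_has_integral[OF s d], of "sin (b * x)"]]
  have "integral {0..d} (\<lambda>t. exp (- s * t) * (sin (b * (x + t)) - sin (b * x)))
      = (G d - G 0) / (s^2 + b^2) - sin (b * x) * ((1 - exp (- s * d)) / s)"
    by (simp add: algebra_simps integral_unique)
  then have "lap_right (\<lambda>y. sin (b * y)) x d s
      = s^2 * ((G d - G 0) / (s^2 + b^2) - sin (b * x) * ((1 - exp (- s * d)) / s))"
    unfolding lap_right_def by simp
  moreover have "s^2 * ((E * (- s * P - b * Q) - (- s * A - b * B)) / (s^2 + b^2) - A * ((1 - E) / s))
      = s * b * (s * B - b * A) / (s^2 + b^2) + E * (s^2 * (- s * P - b * Q) / (s^2 + b^2) + s * A)"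
    for E P Q A B :: real
    using s sb by (simp add: divide_simps) (simp add: algebra_simps power2_eq_square)
  ultimately show ?thesis unfolding G_def by simp
qed

lemma abs_lap_right_sin_minus_le:
  fixes s b d x :: real
  assumes s: "s > 0" and b: "b > 0" and d: "d \<ge> 0"
  shows "\<bar>lap_right (\<lambda>y. sin (b * y)) x d s - s * b * (s * cos (b * x) - b * sin (b * x)) / (s^2 + b^2)\<bar>
    \<le> exp (- s * d) * (2 * s + b)"
proof -
  define R where "R = - s * sin (b * (x + d)) - b * cos (b * (x + d))"
  have sb: "s^2 + b^2 > 0" using s b by (simp add: add_pos_pos)
  have "\<bar>R\<bar> \<le> s * \<bar>sin (b * (x + d))\<bar> + b * \<bar>cos (b * (x + d))\<bar>"
    unfolding R_def using s b by (simp add: abs_mult abs_triangle_ineq4[THEN order.trans])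
  also have "\<dots> \<le> s * 1 + b * 1" using s b by (intro add_mono mult_left_mono) auto
  finally have R: "\<bar>R\<bar> \<le> s + b" by simp
  have "\<bar>s^2 * R / (s^2 + b^2)\<bar> = s^2 / (s^2 + b^2) * \<bar>R\<bar>" using sb by (simp add: abs_mult)
  also have "\<dots> \<le> 1 * (s + b)" using sb R by (intro mult_mono) auto
  finally have "\<bar>s^2 * R / (s^2 + b^2)\<bar> \<le> s + b" by simp
  moreover have "\<bar>s * sin (b * x)\<bar> \<le> s" using s by (simp add: abs_mult mult_left_le)
  ultimately have "\<bar>s^2 * R / (s^2 + b^2) + s * sin (b * x)\<bar> \<le> 2 * s + b" by linarith
  then show ?thesis
    unfolding lap_right_sin[OF assms] R_def[symmetric] by (simp add: abs_mult mult_left_mono)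
qed

lemma abs_lap_right_weier_sum_le:
  assumes "s > 0" "d \<ge> 0"
  shows "\<bar>lap_right (weier_sum k) x d s\<bar> \<le> 100^k / 99"
proof (rule abs_lap_right_le_Lipschitz[OF _ assms])
  show "continuous_on {x..x + d} (weier_sum k)"
    by (rule continuous_on_if_has_real_derivative[OF has_real_derivative_weier_sum])
  fix t :: real assume "t \<in> {0..d}"
  then show "\<bar>weier_sum k (x + t) - weier_sum k x\<bar> \<le> 100^k / 99 * t"
    using abs_weier_sum_diff_le[of k "x + t" x] by simp
qed simp

lemma abs_lap_right_weier_tail_le:
  assumes "s > 0" "d \<ge> 0"
  shows "\<bar>lap_right (\<lambda>y. weier y - weier_sum n y) x d s\<bar> \<le> 4 * weier_a n * s"
  using abs_lap_right_le_bounded[of x d "\<lambda>y. weier y - weier_sum n y" s "2 * weier_a n"]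
    assms abs_weier_minus_sum_le weier_a_pos[of n]
  by (auto intro!: continuous_intros continuous_on_weier
      continuous_on_if_has_real_derivative[OF has_real_derivative_weier_sum])

lemma sin_cos_lower_bound: "1/5 \<le> \<bar>cos y - sin y\<bar> \<or> 1/4 \<le> \<bar>2 * cos y - sin y\<bar>" for y :: real
proof (rule ccontr)
  assume "\<not> ?thesis"
  then have "\<bar>cos y\<bar> \<le> \<bar>9/20\<bar>" "\<bar>sin y\<bar> \<le> \<bar>13/20\<bar>" by linarith+
  then have "(cos y)^2 \<le> (9/20)^2" "(sin y)^2 \<le> (13/20)^2" unfolding abs_le_square_iff .
  moreover have "(9/20 :: real)^2 = 81/400" "(13/20 :: real)^2 = 169/400" by (simp_all add: power2_eq_square)
  ultimately show False using sin_cos_squared_add[of y] by linarith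
qed

lemma lap_right_weier_split:
  "lap_right weier x d s = lap_right (weier_sum k) x d s
    + weier_a k * lap_right (\<lambda>y. sin (weier_b k * y)) x d s
    + lap_right (\<lambda>y. weier y - weier_sum (Suc k) y) x d s"
proof -
  have sum_cont: "continuous_on S (weier_sum n)" for n S
    by (rule continuous_on_if_has_real_derivative[OF has_real_derivative_weier_sum])
  have "weier = (\<lambda>y. (weier_sum k y + weier_a k * sin (weier_b k * y)) + (weier y - weier_sum (Suc k) y))"
    unfolding weier_sum_def by (auto simp: fun_eq_iff)
  from arg_cong[where f = "\<lambda>F. lap_right F x d s", OF this]
  have "lap_right weier x d s = lap_right (\<lambda>y. weier_sum k y + weier_a k * sin (weier_b k * y)) x d s
      + lap_right (\<lambda>y. weier y - weier_sum (Suc k) y) x d s"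
    by (simp add: lap_right_add continuous_intros sum_cont continuous_on_weier)
  moreover have "lap_right (\<lambda>y. weier_sum k y + weier_a k * sin (weier_b k * y)) x d s
      = lap_right (weier_sum k) x d s + weier_a k * lap_right (\<lambda>y. sin (weier_b k * y)) x d s"
    using lap_right_add[OF sum_cont, of x d "\<lambda>y. weier_a k * sin (weier_b k * y)"]
    by (simp add: lap_right_cmult continuous_intros)
  ultimately show ?thesis by simp
qed

lemma abs_lap_right_sin_scaled_minus_le:
  fixes b d \<sigma> :: real
  assumes b: "b > 0" and d: "d > 0" and \<sigma>: "1 \<le> \<sigma>" "\<sigma> \<le> 2" and damped: "exp (- b * d) \<le> 1/500"
  shows "\<bar>lap_right (\<lambda>y. sin (b * y)) x d (\<sigma> * b) - b * (\<sigma> * (\<sigma> * cos (b * x) - sin (b * x)) / (\<sigma>^2 + 1))\<bar>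
    \<le> b / 100"
proof -
  define s where "s = \<sigma> * b"
  have s: "s > 0" "b \<le> s" "s \<le> 2 * b" unfolding s_def using b \<sigma> by auto
  have "s * b * (s * cos (b * x) - b * sin (b * x)) / (s^2 + b^2)
      = b * (\<sigma> * (\<sigma> * cos (b * x) - sin (b * x)) / (\<sigma>^2 + 1))"
  proof -
    have "s^2 + b^2 \<noteq> 0" using b by (simp add: add_nonneg_pos)
    moreover have "\<sigma>^2 + 1 \<noteq> 0" using zero_le_power2[of \<sigma>] by linarith
    ultimately show ?thesis unfolding s_def by (simp add: divide_simps) (simp add: algebra_simps power2_eq_square)
  qed
  with abs_lap_right_sin_minus_le[OF s(1) b less_imp_le[OF d], of x]
  have "\<bar>lap_right (\<lambda>y. sin (b * y)) x d s - b * (\<sigma> * (\<sigma> * cos (b * x) - sin (b * x)) / (\<sigma>^2 + 1))\<bar>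
      \<le> exp (- s * d) * (2 * s + b)" by simp
  also have "\<dots> \<le> exp (- b * d) * (5 * b)"
    using s d by (intro mult_mono) (auto simp: mult_right_mono)
  also have "\<dots> \<le> b / 100"
    using damped b by (simp add: mult_right_mono)
  finally show ?thesis unfolding s_def .
qed

text \<open>At \<open>s = \<sigma> b\<^sub>k\<close> the \<open>k\<close>-th term contributes about \<open>100\<^sup>k\<close> times the main term of
  \<open>lap_right_sin\<close>, while the earlier terms contribute at most \<open>100\<^sup>k/99\<close> (Lipschitz bound) and the
  later ones at most \<open>8 \<cdot> 100\<^sup>k/1000\<close> (sup bound).\<close>
lemma abs_lap_right_weier_ge:
  assumes d: "d > 0" and \<sigma>: "1 \<le> \<sigma>" "\<sigma> \<le> 2"
    and main: "1/10 \<le> \<bar>\<sigma> * (\<sigma> * cos (weier_b k * x) - sin (weier_b k * x)) / (\<sigma>^2 + 1)\<bar>"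
    and damped: "exp (- weier_b k * d) \<le> 1/500"
  shows "100^k / 20 \<le> \<bar>lap_right weier x d (\<sigma> * weier_b k)\<bar>"
proof -
  define b where "b = weier_b k"
  define s where "s = \<sigma> * b"
  define m where "m = \<sigma> * (\<sigma> * cos (b * x) - sin (b * x)) / (\<sigma>^2 + 1)"
  have b: "b > 0" unfolding b_def by (rule weier_b_pos)
  have s: "s > 0" "s \<le> 2 * b" unfolding s_def using b \<sigma> by auto
  have ab: "weier_a k * b = 100^k" unfolding b_def by (rule weier_a_mult_b)
  have earlier: "\<bar>lap_right (weier_sum k) x d s\<bar> \<le> 100^k / 99"
    using s d by (intro abs_lap_right_weier_sum_le) auto
  have "\<bar>lap_right (\<lambda>y. weier y - weier_sum (Suc k) y) x d s\<bar> \<le> 4 * weier_a (Suc k) * s"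
    using s d by (intro abs_lap_right_weier_tail_le) auto
  also have "\<dots> \<le> 4 * weier_a (Suc k) * (2 * b)"
    using s weier_a_pos[of "Suc k"] by (intro mult_left_mono) auto
  also have "\<dots> = 8 * (weier_a k * b) / 1000" by (simp add: weier_a_def)
  finally have later: "\<bar>lap_right (\<lambda>y. weier y - weier_sum (Suc k) y) x d s\<bar> \<le> 8 * 100^k / 1000"
    by (simp only: ab)
  have "weier_a k * \<bar>lap_right (\<lambda>y. sin (b * y)) x d s - b * m\<bar> \<le> weier_a k * (b / 100)"
    using abs_lap_right_sin_scaled_minus_le[OF b d \<sigma>] damped weier_a_pos[of k]
    unfolding s_def m_def b_def by (intro mult_left_mono) auto
  moreover have "weier_a k * lap_right (\<lambda>y. sin (b * y)) x d s - 100^k * m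
      = weier_a k * (lap_right (\<lambda>y. sin (b * y)) x d s - b * m)"
    by (simp add: algebra_simps flip: ab)
  then have "\<bar>weier_a k * lap_right (\<lambda>y. sin (b * y)) x d s - 100^k * m\<bar>
      = weier_a k * \<bar>lap_right (\<lambda>y. sin (b * y)) x d s - b * m\<bar>"
    using weier_a_pos[of k] by (simp add: abs_mult)
  moreover have "weier_a k * (b / 100) = 100^k / 100" using ab by simp
  moreover have "100^k * (1/10) \<le> 100^k * \<bar>m\<bar>"
    using main unfolding m_def b_def by (intro mult_left_mono) auto
  moreover have "\<bar>100^k * m\<bar> = 100^k * \<bar>m\<bar>" by (simp add: abs_mult)
  ultimately have "100^k / 20 \<le> \<bar>lap_right weier x d s\<bar>"
    using earlier later unfolding lap_right_weier_split[of x d s k] b_def[symmetric] by linarith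
  then show ?thesis unfolding s_def b_def .
qed

lemma eventually_less_power:
  fixes q :: real
  assumes "1 < q"
  shows "eventually (\<lambda>k. B < q^k) sequentially"
proof -
  obtain n where "B < q^n" using real_arch_pow[OF assms] by blast
  then show ?thesis
    unfolding eventually_sequentially using assms
    by (metis order_less_le_trans power_increasing less_imp_le)
qed

lemma lap_right_weier_unbounded:
  assumes d: "d > 0"
  shows "\<exists>\<^sub>F s in at_top. B < \<bar>lap_right weier x d s\<bar>"
proof -
  have "\<exists>s\<ge>S. B < \<bar>lap_right weier x d s\<bar>" for S
  proof -
    have "eventually (\<lambda>k. 20 * B < (100::real)^k) sequentially"
      "eventually (\<lambda>k. max S (ln 500 / d) < weier_b k) sequentially"
      unfolding weier_b_def by (intro eventually_less_power; simp)+
    from eventually_happens'[OF sequentially_bot eventually_conj[OF this]]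
    obtain k where k: "20 * B < 100^k" "S < weier_b k" "ln 500 / d < weier_b k" by auto
    then have "ln 500 < weier_b k * d" using d by (simp add: divide_less_eq)
    then have "500 < exp (weier_b k * d)" by (subst ln_less_cancel_iff[symmetric]) auto
    then have "exp (- weier_b k * d) \<le> 1/500" by (simp add: exp_minus field_simps)
    with d have large: "100^k / 20 \<le> \<bar>lap_right weier x d (\<sigma> * weier_b k)\<bar>"
      if "1 \<le> \<sigma>" "\<sigma> \<le> 2" "1/10 \<le> \<bar>\<sigma> * (\<sigma> * cos (weier_b k * x) - sin (weier_b k * x)) / (\<sigma>^2 + 1)\<bar>"
      for \<sigma>
      using that by (intro abs_lap_right_weier_ge)
    have one_eq_half_abs: "\<bar>1 * X / (1^2 + 1)\<bar> = 1/2 * \<bar>X\<bar>"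
      and two_eq_two_fifths_abs: "\<bar>2 * X / (2^2 + 1)\<bar> = 2/5 * \<bar>X\<bar>" for X :: real
      by (simp_all add: abs_divide abs_mult)
    from sin_cos_lower_bound[of "weier_b k * x"] show ?thesis
    proof
      assume "1/5 \<le> \<bar>cos (weier_b k * x) - sin (weier_b k * x)\<bar>"
      then have "1/10 \<le> \<bar>1 * (1 * cos (weier_b k * x) - sin (weier_b k * x)) / (1^2 + 1)\<bar>"
        unfolding one_eq_half_abs by simp
      with large[of 1] k show ?thesis by (intro exI[of _ "1 * weier_b k"]) auto
    next
      assume "1/4 \<le> \<bar>2 * cos (weier_b k * x) - sin (weier_b k * x)\<bar>"
      then have "1/10 \<le> \<bar>2 * (2 * cos (weier_b k * x) - sin (weier_b k * x)) / (2^2 + 1)\<bar>"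
        unfolding two_eq_two_fifths_abs by simp
      with large[of 2] k weier_b_pos[of k] show ?thesis by (intro exI[of _ "2 * weier_b k"]) auto
    qed
  qed
  then show ?thesis by (auto simp: frequently_def eventually_at_top_linorder)
qed

lemma alex_norm_weier_sum_deriv_diff_le:
  assumes ab: "a < b" and mn: "N \<le> m" "N \<le> n"
  shows "alex_norm a b (\<lambda>x. weier_sum_deriv m x - weier_sum_deriv n x) \<le> 8 * weier_a N"
proof (rule alex_norm_le)
  have close: "\<bar>weier_sum m z - weier_sum n z\<bar> \<le> 4 * weier_a N" for z
    using abs_weier_minus_sum_le[of z m] abs_weier_minus_sum_le[of z n]
      weier_a_antimono[OF mn(1)] weier_a_antimono[OF mn(2)] by linarith
  fix x assume x: "x \<in> {a<..b}"
  have "LP_integral a x (\<lambda>x. weier_sum_deriv m x - weier_sum_deriv n x)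
      = (weier_sum m x - weier_sum n x) - (weier_sum m a - weier_sum n a)"
    using x by (intro LP_integral_has_real_derivative(2) derivative_intros has_real_derivative_weier_sum) auto
  with close[of x] close[of a]
  show "\<bar>LP_integral a x (\<lambda>x. weier_sum_deriv m x - weier_sum_deriv n x)\<bar> \<le> 8 * weier_a N"
    by linarith
qed (use ab weier_a_pos[of N] in auto)

theorem theorem5p10:
  shows "\<exists>f :: nat \<Rightarrow> real \<Rightarrow> real.
           (\<forall>n. LP_integrable 0 1 (f n)) \<and>
           (\<forall>e>0. \<exists>N. \<forall>m\<ge>N. \<forall>n\<ge>N. alex_norm 0 1 (\<lambda>x. f m x - f n x) < e) \<and>
           \<not> (\<exists>g. LP_integrable 0 1 g \<and>
                 (\<lambda>n. alex_norm 0 1 (\<lambda>x. f n x - g x)) \<longlonglongrightarrow> 0)"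
proof (intro exI[of _ weier_sum_deriv] conjI allI impI notI)
  show "LP_integrable 0 1 (weier_sum_deriv n)" for n
    by (rule LP_integral_has_real_derivative(1)[OF zero_less_one has_real_derivative_weier_sum])
  fix e :: real assume "e > 0"
  then obtain N where "8 * weier_a N < e"
    using order_tendstoD(2)[OF tendsto_mult_left[OF weier_a_tendsto, of 8], of e]
    by (auto simp: eventually_sequentially)
  then show "\<exists>N. \<forall>m\<ge>N. \<forall>n\<ge>N. alex_norm 0 1 (\<lambda>x. weier_sum_deriv m x - weier_sum_deriv n x) < e"
    using alex_norm_weier_sum_deriv_diff_le[OF zero_less_one] by (meson le_less_trans)
next
  assume "\<exists>g. LP_integrable 0 1 g \<and> (\<lambda>n. alex_norm 0 1 (\<lambda>x. weier_sum_deriv n x - g x)) \<longlonglongrightarrow> 0"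
  then obtain g where g: "LP_integrable 0 1 g"
    and lim: "(\<lambda>n. alex_norm 0 1 (\<lambda>x. weier_sum_deriv n x - g x)) \<longlonglongrightarrow> 0" by blast
  obtain U V where U: "major_fun 0 1 g U" and V: "minor_fun 0 1 g V"
    using LP_integrable_obtain_major_minor[OF g zero_less_one] by blast
  have "V x - V 0 \<le> weier x - weier 0 \<and> weier x - weier 0 \<le> U x - U 0"
    if "major_fun 0 1 g U" "minor_fun 0 1 g V" "x \<in> {0..1}" for U V x
    using that by (intro primitive_limit_between_major_minor[OF zero_less_one has_real_derivative_weier_sum lim]
        tendsto_diff weier_sum_tendsto)
  from major_minus_primitive_mono[OF zero_less_one g this U V]
  show False
    by (intro not_primitive_if_lap_right_unbounded[OF zero_less_one U V continuous_on_weier])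
      (auto intro: lap_right_weier_unbounded)
qed

end
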